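(* Let $B(t)=D_{\le2}(t)+t$ and let $Z(x)$ be the unique power series with $Z(0)=0$ and $Z(x)=x\,B(Z(x))$. Then $$I_0(x)=\frac{x}{1-x\,B'(Z(x))}.$$
   Context: Chord diagrams are perfect matchings of $\{1,\dots,2n\}$ counted by number of chords; connected components are those of the intersection graph (chords adjacent iff they cross, i.e. $\{a<b\},\{c<d\}$ with $a<c<b<d$ or $c<a<d<b$). $D_{\le2}(x)$ is the ordinary generating function of chord diagrams with at most two connected components (empty diagram included). $I_0(x)$ is the ordinary generating function of nonempty indecomposable chord diagrams (no $0<k<n$ with $\{1,\dots,2k\}$ a union of chords). *)

theory Defs
  imports "HOL-Computational_Algebra.Formal_Power_Series"
begin

definition chord_diagram :: "nat \<Rightarrow> (nat \<times> nat) set \<Rightarrow> bool" where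
  "chord_diagram n C \<longleftrightarrow>
     (\<forall>(a,b)\<in>C. 1 \<le> a \<and> a < b \<and> b \<le> 2*n) \<and>
     (\<forall>k\<in>{1..2*n}. \<exists>!c\<in>C. k = fst c \<or> k = snd c)"

definition crosses :: "nat \<times> nat \<Rightarrow> nat \<times> nat \<Rightarrow> bool" where
  "crosses x y \<longleftrightarrow> (case x of (a,b) \<Rightarrow> case y of (c,d) \<Rightarrow>
      (a < c \<and> c < b \<and> b < d) \<or> (c < a \<and> a < d \<and> d < b))"

definition cross_rel :: "(nat \<times> nat) set \<Rightarrow> ((nat \<times> nat) \<times> (nat \<times> nat)) set" where
  "cross_rel C = {(x,y). x \<in> C \<and> y \<in> C \<and> crosses x y}"

definition num_components :: "(nat \<times> nat) set \<Rightarrow> nat" where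
  "num_components C = card (C // ((cross_rel C)\<^sup>*))"

definition indecomposable :: "nat \<Rightarrow> (nat \<times> nat) set \<Rightarrow> bool" where
  "indecomposable n C \<longleftrightarrow> 0 < n \<and>
     \<not> (\<exists>k. 0 < k \<and> k < n \<and> (\<exists>S\<subseteq>C. {1..2*k} = (\<Union>(a,b)\<in>S. {a,b})))"

text \<open>Ordinary generating function of chord diagrams with at most two components
  (empty diagram included).\<close>
definition D_le2 :: "rat fps" where
  "D_le2 = Abs_fps (\<lambda>n. of_nat (card {C. chord_diagram n C \<and> num_components C \<le> 2}))"

definition I0 :: "rat fps" where
  "I0 = Abs_fps (\<lambda>n. of_nat (card {C. chord_diagram n C \<and> indecomposable n C}))"

end

theory Submission
  imports Defs "HOL-Library.Infinite_Set"
begin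

text \<open>Let \<open>D\<close> and \<open>C\<close> count all and connected chord diagrams by chords. Cutting a diagram after
  its first indecomposable block gives \<open>I\<^sub>0 D = D - 1\<close>. Removing the component of the chord at the
  first point, whose \<open>2k\<close> endpoints leave \<open>2k\<close> gaps each filled by an arbitrary diagram, gives
  \<open>D = 1 + C(x D\<^sup>2)\<close>; allowing at most one more component, which must then sit in a single
  gap, gives \<open>D\<^sub>\<le>\<^sub>2 = 1 + C + 2 x C C'\<close>. Finally \<open>D = \<Sum> (2n - 1)!! x\<^sup>n\<close> satisfies
  \<open>D - 1 = x D + 2 x\<^sup>2 D'\<close>. With \<open>T = x D\<^sup>2\<close> these identities give \<open>T = x B(T)\<close> and
  \<open>I\<^sub>0 = x / (1 - x B'(T))\<close>.\<close>

section \<open>Perfect matchings of finite sets of points\<close>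

definition matching :: "nat set \<Rightarrow> (nat \<times> nat) set \<Rightarrow> bool" where
  "matching P C \<longleftrightarrow> (\<forall>c\<in>C. fst c < snd c \<and> fst c \<in> P \<and> snd c \<in> P) \<and>
     (\<forall>k\<in>P. \<exists>!c\<in>C. k = fst c \<or> k = snd c)"

definition chord_ends :: "nat \<times> nat \<Rightarrow> nat set" where
  "chord_ends c = {fst c, snd c}"

definition points :: "(nat \<times> nat) set \<Rightarrow> nat set" where
  "points C = \<Union>(chord_ends ` C)"

definition chords_disjoint :: "(nat \<times> nat) set \<Rightarrow> bool" where
  "chords_disjoint C \<longleftrightarrow> (\<forall>c\<in>C. \<forall>d\<in>C. c \<noteq> d \<longrightarrow> chord_ends c \<inter> chord_ends d = {})"

lemma in_points_iff: "k \<in> points C \<longleftrightarrow> (\<exists>c\<in>C. k = fst c \<or> k = snd c)"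
  by (auto simp: points_def chord_ends_def)

lemma points_Un [simp]: "points (A \<union> B) = points A \<union> points B"
  by (auto simp: points_def)

lemma points_empty [simp]: "points {} = {}"
  by (simp add: points_def)

lemma points_insert [simp]: "points (insert c A) = {fst c, snd c} \<union> points A"
  by (auto simp: points_def chord_ends_def)

lemma points_mono: "A \<subseteq> B \<Longrightarrow> points A \<subseteq> points B"
  by (auto simp: points_def)

lemma UN_chord_ends_eq_points: "(\<Union>(a,b)\<in>S. {a,b}) = points S"
  unfolding points_def chord_ends_def by auto

lemma matching_chordD: "matching P C \<Longrightarrow> c \<in> C \<Longrightarrow> fst c < snd c \<and> fst c \<in> P \<and> snd c \<in> P"
  unfolding matching_def by blast

lemma matching_unique_chord: "matching P C \<Longrightarrow> k \<in> P \<Longrightarrow> \<exists>!c\<in>C. k = fst c \<or> k = snd c"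
  unfolding matching_def by blast

lemma matching_iff_disjoint:
  "matching P C \<longleftrightarrow> (\<forall>c\<in>C. fst c < snd c) \<and> points C = P \<and> chords_disjoint C"
proof
  assume m: "matching P C"
  have "chords_disjoint C"
    unfolding chords_disjoint_def chord_ends_def
  proof (intro ballI impI)
    fix c d assume cd: "c \<in> C" "d \<in> C" "c \<noteq> d"
    show "{fst c, snd c} \<inter> {fst d, snd d} = {}"
    proof (rule ccontr)
      assume "{fst c, snd c} \<inter> {fst d, snd d} \<noteq> {}"
      then obtain k where k: "k \<in> {fst c, snd c}" "k \<in> {fst d, snd d}" by blast
      then have "k \<in> P" using matching_chordD[OF m cd(1)] by auto
      then show False using matching_unique_chord[OF m] k cd by auto
    qed
  qed
  moreover have "points C = P"
    using m unfolding matching_def in_points_iff set_eq_iff by blast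
  ultimately show "(\<forall>c\<in>C. fst c < snd c) \<and> points C = P \<and> chords_disjoint C"
    using m unfolding matching_def by blast
next
  assume h: "(\<forall>c\<in>C. fst c < snd c) \<and> points C = P \<and> chords_disjoint C"
  have "\<exists>!c\<in>C. k = fst c \<or> k = snd c" if "k \<in> P" for k
  proof -
    obtain c where c: "c \<in> C" "k = fst c \<or> k = snd c" using h \<open>k \<in> P\<close> in_points_iff by blast
    have "d = c" if "d \<in> C" "k = fst d \<or> k = snd d" for d
    proof (rule ccontr)
      assume "d \<noteq> c"
      then have "chord_ends d \<inter> chord_ends c = {}"
        using h that(1) c(1) unfolding chords_disjoint_def by blast
      then show False using that(2) c(2) unfolding chord_ends_def by auto
    qed
    then show ?thesis using c by blast
  qed
  then show "matching P C"
    using h in_points_iff unfolding matching_def by blast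
qed

lemma matching_points: "matching P C \<Longrightarrow> points C = P"
  by (simp add: matching_iff_disjoint)

lemma chords_disjoint_subset: "chords_disjoint C \<Longrightarrow> A \<subseteq> C \<Longrightarrow> chords_disjoint A"
  unfolding chords_disjoint_def by blast

lemma matching_points_subset: "matching P C \<Longrightarrow> A \<subseteq> C \<Longrightarrow> matching (points A) A"
  unfolding matching_iff_disjoint using chords_disjoint_subset by blast

lemma points_Diff:
  assumes "chords_disjoint C" "A \<subseteq> C"
  shows "points (C - A) = points C - points A"
proof
  show "points (C - A) \<subseteq> points C - points A"
  proof
    fix k assume "k \<in> points (C - A)"
    then obtain c where c: "c \<in> C - A" "k \<in> chord_ends c" unfolding points_def by blast
    have "k \<notin> chord_ends d" if "d \<in> A" for d
    proof -
      have "c \<noteq> d" using c that by blast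
      then have "chord_ends c \<inter> chord_ends d = {}"
        using assms c that unfolding chords_disjoint_def by blast
      then show ?thesis using c by blast
    qed
    then show "k \<in> points C - points A" using c unfolding points_def by blast
  qed
  show "points C - points A \<subseteq> points (C - A)" unfolding points_def by blast
qed

lemma matching_Diff:
  assumes "matching P C" "A \<subseteq> C"
  shows "matching (P - points A) (C - A)"
proof -
  have "chords_disjoint C" "points C = P" using assms(1) by (auto simp: matching_iff_disjoint)
  then have "chords_disjoint (C - A)" "points (C - A) = P - points A"
    using chords_disjoint_subset points_Diff assms(2) by auto
  then show ?thesis using assms(1) unfolding matching_iff_disjoint by auto
qed

lemma matching_Un:
  assumes "matching P1 C1" "matching P2 C2" "P1 \<inter> P2 = {}"
  shows "matching (P1 \<union> P2) (C1 \<union> C2)"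
proof -
  have "chords_disjoint (C1 \<union> C2)"
    unfolding chords_disjoint_def
  proof (intro ballI impI)
    fix c d assume cd: "c \<in> C1 \<union> C2" "d \<in> C1 \<union> C2" "c \<noteq> d"
    have "c \<in> C1 \<Longrightarrow> chord_ends c \<subseteq> P1" "d \<in> C1 \<Longrightarrow> chord_ends d \<subseteq> P1"
      "c \<in> C2 \<Longrightarrow> chord_ends c \<subseteq> P2" "d \<in> C2 \<Longrightarrow> chord_ends d \<subseteq> P2"
      using assms unfolding matching_iff_disjoint points_def by auto
    then show "chord_ends c \<inter> chord_ends d = {}"
      using cd assms unfolding matching_iff_disjoint chords_disjoint_def by blast
  qed
  then show ?thesis using assms unfolding matching_iff_disjoint by auto
qed

lemma matching_split:
  assumes m: "matching (P1 \<union> P2) C" and disj: "P1 \<inter> P2 = {}"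
    and no_bridge: "\<forall>c\<in>C. fst c \<in> P1 \<longleftrightarrow> snd c \<in> P1"
  shows "matching P1 {c\<in>C. fst c \<in> P1}" "matching P2 {c\<in>C. fst c \<notin> P1}"
proof -
  let ?C1 = "{c\<in>C. fst c \<in> P1}" and ?C2 = "{c\<in>C. fst c \<notin> P1}"
  have "points ?C1 \<subseteq> P1"
  proof
    fix k assume "k \<in> points ?C1"
    then obtain c where "c \<in> C" "fst c \<in> P1" "k = fst c \<or> k = snd c"
      by (auto simp: in_points_iff)
    then show "k \<in> P1" using no_bridge by auto
  qed
  moreover have "points ?C2 \<subseteq> P2"
  proof
    fix k assume "k \<in> points ?C2"
    then obtain c where c: "c \<in> C" "fst c \<notin> P1" "k = fst c \<or> k = snd c"
      by (auto simp: in_points_iff)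
    then show "k \<in> P2" using matching_chordD[OF m c(1)] no_bridge by auto
  qed
  moreover have "?C1 \<union> ?C2 = C" by blast
  then have "points ?C1 \<union> points ?C2 = P1 \<union> P2"
    using matching_points[OF m] points_Un[of ?C1 ?C2] by simp
  ultimately have "points ?C1 = P1" "points ?C2 = P2" using disj by blast+
  then show "matching P1 ?C1" "matching P2 ?C2"
    using matching_points_subset[OF m, of ?C1] matching_points_subset[OF m, of ?C2] by auto
qed

lemma inj_on_Un_matchings:
  assumes disj: "P1 \<inter> P2 = {}" and R: "\<forall>(X, Y)\<in>R. matching P1 X \<and> matching P2 Y"
  shows "inj_on (\<lambda>(X, Y). X \<union> Y) R"
proof (rule inj_onI, clarify)
  fix X Y X' Y' assume in_R: "(X, Y) \<in> R" "(X', Y') \<in> R" and eq: "X \<union> Y = X' \<union> Y'"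
  have parts: "A = {c \<in> A \<union> B. fst c \<in> P1}" "B = {c \<in> A \<union> B. fst c \<notin> P1}"
    if "(A, B) \<in> R" for A B
  proof -
    have "matching P1 A" "matching P2 B" using R that by auto
    then have "\<forall>c\<in>A. fst c \<in> P1" "\<forall>c\<in>B. fst c \<in> P2"
      using matching_chordD by blast+
    then show "A = {c \<in> A \<union> B. fst c \<in> P1}" "B = {c \<in> A \<union> B. fst c \<notin> P1}"
      using disj by blast+
  qed
  show "X = X' \<and> Y = Y'" using parts[OF in_R(1)] parts[OF in_R(2)] eq by metis
qed

lemma matching_subset_Times: "matching P C \<Longrightarrow> C \<subseteq> P \<times> P"
  unfolding matching_def by (auto simp: mem_Times_iff)

lemma finite_matching: "finite P \<Longrightarrow> matching P C \<Longrightarrow> finite C"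
  using matching_subset_Times finite_subset by blast

lemma finite_matchings: "finite P \<Longrightarrow> finite {C. matching P C}"
proof -
  assume "finite P"
  then have "{C. matching P C} \<subseteq> Pow (P \<times> P)" using matching_subset_Times by blast
  then show ?thesis using \<open>finite P\<close> finite_subset by blast
qed

lemma matching_empty_iff: "matching P {} \<longleftrightarrow> P = {}"
  by (auto simp: matching_iff_disjoint chords_disjoint_def points_def)

lemma matching_empty_points_iff: "matching {} C \<longleftrightarrow> C = {}"
  by (auto simp: matching_iff_disjoint points_def chord_ends_def chords_disjoint_def)

lemma card_points_matching:
  assumes "finite P" "matching P C"
  shows "card P = 2 * card C"
proof -
  have fC: "finite C" using assms finite_matching by blast
  have "card P = card (\<Union>(chord_ends ` C))" using assms matching_points points_def by metis
  also have "\<dots> = (\<Sum>c\<in>C. card (chord_ends c))"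
    using assms fC unfolding matching_iff_disjoint chords_disjoint_def
    by (intro card_UN_disjoint) (auto simp: chord_ends_def)
  also have "\<dots> = (\<Sum>c\<in>C. 2)"
    using assms unfolding matching_iff_disjoint by (intro sum.cong) (auto simp: chord_ends_def)
  finally show ?thesis by simp
qed

lemma no_matching_odd_card: "finite P \<Longrightarrow> odd (card P) \<Longrightarrow> \<not> matching P C"
  using card_points_matching by fastforce

lemma matching_single_chord: "a < b \<Longrightarrow> matching {a,b} {(a,b)}"
  unfolding matching_iff_disjoint chords_disjoint_def by (auto simp: points_def chord_ends_def)

section \<open>The crossing graph\<close>

definition noncrossing :: "(nat \<times> nat) set \<Rightarrow> (nat \<times> nat) set \<Rightarrow> bool" where
  "noncrossing A B \<longleftrightarrow> (\<forall>x\<in>A. \<forall>y\<in>B. \<not> crosses x y)"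

lemma crosses_sym: "crosses x y \<Longrightarrow> crosses y x"
  unfolding crosses_def by (auto split: prod.splits)

lemma crosses_iff:
  "crosses x y \<longleftrightarrow> (fst x < fst y \<and> fst y < snd x \<and> snd x < snd y) \<or>
                    (fst y < fst x \<and> fst x < snd y \<and> snd y < snd x)"
  by (cases x, cases y) (simp add: crosses_def)

lemma noncrossing_sym: "noncrossing A B \<Longrightarrow> noncrossing B A"
  unfolding noncrossing_def using crosses_sym by blast

lemma cross_rel_iff: "(x,y) \<in> cross_rel C \<longleftrightarrow> x \<in> C \<and> y \<in> C \<and> crosses x y"
  by (simp add: cross_rel_def)

lemma cross_rel_converse: "(cross_rel C)\<inverse> = cross_rel C"
  unfolding cross_rel_def using crosses_sym by auto

lemma rtrancl_cross_sym: "(x,y) \<in> (cross_rel C)\<^sup>* \<Longrightarrow> (y,x) \<in> (cross_rel C)\<^sup>*"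
  by (metis cross_rel_converse converse_iff rtrancl_converse)

definition component :: "(nat \<times> nat) set \<Rightarrow> nat \<times> nat \<Rightarrow> (nat \<times> nat) set" where
  "component C x = (cross_rel C)\<^sup>* `` {x}"

lemma rtrancl_cross_rel_closed:
  assumes "noncrossing X (G - X)" "x \<in> X" "(x,y) \<in> (cross_rel G)\<^sup>*"
  shows "y \<in> X \<and> (x,y) \<in> (cross_rel X)\<^sup>*"
  using assms(3)
proof (induction rule: rtrancl_induct)
  case base then show ?case using assms by simp
next
  case (step y z)
  then have yX: "y \<in> X" and yz: "y \<in> G" "z \<in> G" "crosses y z" by (auto simp: cross_rel_iff)
  have zX: "z \<in> X"
  proof (rule ccontr)
    assume "z \<notin> X"
    then show False using assms(1) yX yz unfolding noncrossing_def by blast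
  qed
  have "(y,z) \<in> cross_rel X" using yX zX yz by (simp add: cross_rel_iff)
  then show ?case using step zX by (meson rtrancl.rtrancl_into_rtrancl)
qed

lemma cross_rel_mono: "A \<subseteq> G \<Longrightarrow> cross_rel A \<subseteq> cross_rel G"
  unfolding cross_rel_def by auto

lemma component_of_noncrossing_part:
  assumes "A \<subseteq> G" "noncrossing A (G - A)" "x \<in> A"
  shows "component G x = component A x"
proof
  show "component G x \<subseteq> component A x" unfolding component_def using rtrancl_cross_rel_closed[OF assms(2,3)] by blast
  show "component A x \<subseteq> component G x" unfolding component_def using rtrancl_mono[OF cross_rel_mono[OF assms(1)]] by blast
qed

lemma component_subset: "x \<in> C \<Longrightarrow> component C x \<subseteq> C"
proof
  fix y assume x: "x \<in> C" and "y \<in> component C x"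
  then have "(x,y) \<in> (cross_rel C)\<^sup>*" by (simp add: component_def)
  then show "y \<in> C" using x by (induction rule: rtrancl_induct) (auto simp: cross_rel_iff)
qed

lemma component_self: "x \<in> component C x" by (simp add: component_def)

lemma noncrossing_component:
  assumes "x \<in> G" shows "noncrossing (component G x) (G - component G x)"
  unfolding noncrossing_def
proof (intro ballI notI)
  fix y z assume y: "y \<in> component G x" and z: "z \<in> G - component G x" and c: "crosses y z"
  have "y \<in> G" using y component_subset assms by blast
  then have "(y,z) \<in> cross_rel G" using z c by (simp add: cross_rel_iff)
  then have "(x,z) \<in> (cross_rel G)\<^sup>*" using y unfolding component_def by (simp add: rtrancl.rtrancl_into_rtrancl)
  then show False using z unfolding component_def by simp
qed

lemma quotient_cross_rel: "C // (cross_rel C)\<^sup>* = component C ` C"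
  unfolding quotient_def component_def by auto

lemma num_components_eq_card: "num_components C = card (component C ` C)"
  unfolding num_components_def quotient_cross_rel ..

lemma num_components_Un:
  assumes fin: "finite A" "finite B" and dis: "A \<inter> B = {}" and nc: "noncrossing A B"
  shows "num_components (A \<union> B) = num_components A + num_components B"
proof -
  have e1: "(A \<union> B) - A = B" "(A \<union> B) - B = A" using dis by blast+
  have ncA: "noncrossing A ((A \<union> B) - A)" using nc e1 by simp
  have ncB: "noncrossing B ((A \<union> B) - B)" using noncrossing_sym[OF nc] e1 by simp
  have eA: "component (A \<union> B) ` A = component A ` A" using component_of_noncrossing_part[OF _ ncA] by auto
  have eB: "component (A \<union> B) ` B = component B ` B" using component_of_noncrossing_part[OF _ ncB] by auto
  have "component (A \<union> B) ` (A \<union> B) = component A ` A \<union> component B ` B" using eA eB by (simp add: image_Un)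
  moreover have "component A ` A \<inter> component B ` B = {}"
  proof (rule ccontr)
    assume "component A ` A \<inter> component B ` B \<noteq> {}"
    then obtain a b where ab: "a \<in> A" "b \<in> B" "component A a = component B b" by blast
    then have "a \<in> component B b" using component_self by metis
    then have "a \<in> B" using component_subset ab by blast
    then show False using ab dis by blast
  qed
  ultimately show ?thesis unfolding num_components_eq_card using fin by (simp add: card_Un_disjoint)
qed

lemma num_components_empty[simp]: "num_components {} = 0"
  unfolding num_components_eq_card by simp

lemma num_components_pos: "finite C \<Longrightarrow> C \<noteq> {} \<Longrightarrow> num_components C \<ge> 1"
  unfolding num_components_eq_card by (simp add: Suc_le_eq card_gt_0_iff)

lemma num_components_eq_0_iff: "finite C \<Longrightarrow> num_components C = 0 \<longleftrightarrow> C = {}"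
proof
  assume "finite C" "num_components C = 0"
  then show "C = {}" using num_components_pos[of C] by (cases "C = {}") auto
qed simp

definition cross_connected :: "(nat \<times> nat) set \<Rightarrow> bool" where
  "cross_connected C \<longleftrightarrow> C \<noteq> {} \<and> (\<forall>X\<subseteq>C. X \<noteq> {} \<longrightarrow> noncrossing X (C - X) \<longrightarrow> X = C)"

lemma component_eq_if_cross_connected:
  assumes c: "cross_connected C" and x: "x \<in> C" shows "component C x = C"
proof -
  have all: "\<forall>X\<subseteq>C. X \<noteq> {} \<longrightarrow> noncrossing X (C - X) \<longrightarrow> X = C" using c unfolding cross_connected_def by blast
  have "component C x \<subseteq> C" "component C x \<noteq> {}" "noncrossing (component C x) (C - component C x)"
    using component_subset[OF x] component_self[of x C] noncrossing_component[OF x] by auto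
  then show ?thesis using all by blast
qed

lemma num_components_eq_1_iff:
  assumes fin: "finite C"
  shows "num_components C = 1 \<longleftrightarrow> cross_connected C"
proof
  assume h: "num_components C = 1"
  have ne: "C \<noteq> {}" using h by auto
  have "X = C" if X: "X \<subseteq> C" "X \<noteq> {}" "noncrossing X (C - X)" for X
  proof (rule ccontr)
    assume "X \<noteq> C"
    then have ne2: "C - X \<noteq> {}" using X by blast
    have fX: "finite X" "finite (C - X)" using fin X(1) finite_subset by auto
    have u: "X \<union> (C - X) = C" "X \<inter> (C - X) = {}" using X(1) by blast+
    have "num_components C = num_components X + num_components (C - X)"
      using num_components_Un[OF fX u(2) X(3)] u(1) by simp
    moreover have "num_components X \<ge> 1" using num_components_pos X fX by blast
    moreover have "num_components (C - X) \<ge> 1" using num_components_pos ne2 fin by simp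
    ultimately show False using h by simp
  qed
  then show "cross_connected C" using ne unfolding cross_connected_def by blast
next
  assume c: "cross_connected C"
  have "component C x = C" if "x \<in> C" for x
    using c that by (rule component_eq_if_cross_connected)
  then have "component C ` C = {C}" using c unfolding cross_connected_def by auto
  then show "num_components C = 1" unfolding num_components_eq_card by simp
qed

lemma cross_connected_component:
  assumes x: "x \<in> G"
  shows "cross_connected (component G x)"
  unfolding cross_connected_def
proof (intro conjI allI impI)
  let ?R = "component G x"
  show "?R \<noteq> {}" using component_self by blast
  fix X assume X: "X \<subseteq> ?R" "X \<noteq> {}" "noncrossing X (?R - X)"
  have "G - X = (?R - X) \<union> (G - ?R)" using X(1) component_subset[OF x] by blast
  moreover have "noncrossing X (G - ?R)"
    using noncrossing_component[OF x] X(1) unfolding noncrossing_def by blast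
  ultimately have closed: "noncrossing X (G - X)" using X(3) unfolding noncrossing_def by blast
  obtain y where y: "y \<in> X" using X(2) by blast
  then have "(y, x) \<in> (cross_rel G)\<^sup>*"
    using X(1) rtrancl_cross_sym unfolding component_def by blast
  then have "x \<in> X" using rtrancl_cross_rel_closed[OF closed y] by blast
  then have "?R \<subseteq> X"
    using rtrancl_cross_rel_closed[OF closed] unfolding component_def by blast
  then show "X = ?R" using X(1) by blast
qed

lemma num_components_le_1_iff:
  assumes "finite H"
  shows "num_components H \<le> 1 \<longleftrightarrow> H = {} \<or> cross_connected H"
proof -
  have "num_components H \<le> 1 \<longleftrightarrow> num_components H = 0 \<or> num_components H = 1" by auto
  then show ?thesis using num_components_eq_0_iff[OF assms] num_components_eq_1_iff[OF assms] by simp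
qed

lemma cross_connected_image:
  assumes inj: "inj_on g C"
    and crosses_g: "\<And>x y. x \<in> C \<Longrightarrow> y \<in> C \<Longrightarrow> crosses (g x) (g y) \<longleftrightarrow> crosses x y"
  shows "cross_connected (g ` C) \<longleftrightarrow> cross_connected C"
proof -
  have noncrossing_g: "noncrossing (g ` X) (g ` Y) \<longleftrightarrow> noncrossing X Y" if "X \<subseteq> C" "Y \<subseteq> C" for X Y
  proof -
    have "(\<forall>x\<in>X. \<forall>y\<in>Y. \<not> crosses (g x) (g y)) \<longleftrightarrow> (\<forall>x\<in>X. \<forall>y\<in>Y. \<not> crosses x y)"
      using crosses_g that by blast
    then show ?thesis unfolding noncrossing_def by simp
  qed
  have image_Diff: "g ` C - g ` X = g ` (C - X)" if "X \<subseteq> C" for X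
    using inj_on_image_set_diff[OF inj _ that] by simp
  show ?thesis
  proof
    assume c: "cross_connected (g ` C)"
    show "cross_connected C" unfolding cross_connected_def
    proof (intro conjI allI impI)
      show "C \<noteq> {}" using c unfolding cross_connected_def by auto
      fix X assume X: "X \<subseteq> C" "X \<noteq> {}" "noncrossing X (C - X)"
      have "noncrossing (g ` X) (g ` C - g ` X)"
        using X noncrossing_g[of X "C - X"] image_Diff[of X] by simp
      moreover have "g ` X \<subseteq> g ` C" "g ` X \<noteq> {}" using X by auto
      ultimately have "g ` X = g ` C" using c unfolding cross_connected_def by blast
      then show "X = C" using inj_on_image_eq_iff[OF inj X(1) order_refl] by simp
    qed
  next
    assume c: "cross_connected C"
    show "cross_connected (g ` C)" unfolding cross_connected_def
    proof (intro conjI allI impI)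
      show "g ` C \<noteq> {}" using c unfolding cross_connected_def by auto
      fix Y assume Y: "Y \<subseteq> g ` C" "Y \<noteq> {}" "noncrossing Y (g ` C - Y)"
      define X where "X = {c \<in> C. g c \<in> Y}"
      have XC: "X \<subseteq> C" and YX: "Y = g ` X" using Y(1) unfolding X_def by auto
      have "X \<noteq> {}" using Y(2) YX by auto
      moreover have "noncrossing X (C - X)"
        using Y(3) YX noncrossing_g[of X "C - X"] image_Diff[OF XC] XC by simp
      ultimately have "X = C" using c XC unfolding cross_connected_def by blast
      then show "Y = g ` C" using YX by simp
    qed
  qed
qed

section \<open>Counting matchings up to order isomorphism\<close>

definition map_chords :: "(nat \<Rightarrow> nat) \<Rightarrow> (nat \<times> nat) set \<Rightarrow> (nat \<times> nat) set" where
  "map_chords f C = (\<lambda>c. (f (fst c), f (snd c))) ` C"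

lemma map_chords_inj:
  assumes "strict_mono_on P f" "C \<subseteq> P \<times> P" "D \<subseteq> P \<times> P" "map_chords f C = map_chords f D"
  shows "C = D"
proof -
  have "inj_on f P" using assms(1) strict_mono_on_imp_inj_on by blast
  then have "inj_on (\<lambda>c. (f (fst c), f (snd c))) (P \<times> P)"
    unfolding inj_on_def by (auto simp: prod_eq_iff)
  then show ?thesis using assms(2-4) unfolding map_chords_def by (simp add: inj_on_image_eq_iff)
qed

lemma matching_map_chords:
  assumes f: "strict_mono_on P f" and m: "matching P C"
  shows "matching (f ` P) (map_chords f C)"
proof -
  have PP: "C \<subseteq> P \<times> P" using m matching_subset_Times by blast
  have inj: "inj_on f P" using f strict_mono_on_imp_inj_on by blast
  have ord: "\<forall>c\<in>map_chords f C. fst c < snd c"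
  proof
    fix x assume "x \<in> map_chords f C"
    then obtain c where c: "c \<in> C" "x = (f (fst c), f (snd c))" unfolding map_chords_def by blast
    have "fst c \<in> P" "snd c \<in> P" "fst c < snd c" using c PP m unfolding matching_iff_disjoint by auto
    then show "fst x < snd x" using c f strict_mono_onD by fastforce
  qed
  have "points (map_chords f C) = f ` points C" unfolding map_chords_def points_def chord_ends_def by auto
  then have pp: "points (map_chords f C) = f ` P" using m matching_points by simp
  have "chords_disjoint (map_chords f C)"
    unfolding chords_disjoint_def map_chords_def
  proof (intro ballI impI)
    fix x y assume xy: "x \<in> (\<lambda>c. (f (fst c), f (snd c))) ` C" "y \<in> (\<lambda>c. (f (fst c), f (snd c))) ` C" "x \<noteq> y"
    then obtain c d where cd: "c \<in> C" "d \<in> C" "x = (f (fst c), f (snd c))" "y = (f (fst d), f (snd d))" by blast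
    then have "c \<noteq> d" using xy by auto
    then have "chord_ends c \<inter> chord_ends d = {}" using m cd unfolding matching_iff_disjoint chords_disjoint_def by blast
    moreover have "chord_ends c \<subseteq> P" "chord_ends d \<subseteq> P" using PP cd unfolding chord_ends_def by auto
    ultimately have "f ` chord_ends c \<inter> f ` chord_ends d = {}" using inj inj_on_image_Int[of f P "chord_ends c" "chord_ends d"] by simp
    then show "chord_ends x \<inter> chord_ends y = {}" using cd unfolding chord_ends_def by auto
  qed
  then show ?thesis using ord pp unfolding matching_iff_disjoint by blast
qed

lemma strict_mono_on_inv_into:
  fixes f :: "'a::linorder \<Rightarrow> 'b::order"
  assumes f: "strict_mono_on P f"
  shows "strict_mono_on (f ` P) (inv_into P f)"
proof (rule strict_mono_onI)
  fix x y assume "x \<in> f ` P" "y \<in> f ` P" "x < y"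
  then obtain a b where ab: "a \<in> P" "b \<in> P" "x = f a" "y = f b" by blast
  have "inj_on f P" using strict_mono_on_imp_inj_on[OF f] .
  then have "inv_into P f x = a" "inv_into P f y = b" using ab by (simp_all add: inv_into_f_f)
  moreover have "a < b"
  proof (rule ccontr)
    assume "\<not> a < b"
    then have "b < a \<or> b = a" by auto
    then have "f b \<le> f a" using strict_mono_onD[OF f ab(2) ab(1)] by (auto intro: less_imp_le)
    then show False using \<open>x < y\<close> ab by simp
  qed
  ultimately show "inv_into P f x < inv_into P f y" by simp
qed

lemma matching_map_chords_surj:
  assumes f: "strict_mono_on P f" and m: "matching (f ` P) C'"
  shows "\<exists>C. matching P C \<and> map_chords f C = C'"
proof
  let ?g = "inv_into P f"
  have "inj_on f P" using strict_mono_on_imp_inj_on[OF f] .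
  then have "?g ` f ` P = P" by (rule inv_into_image_cancel) simp
  then show "matching P (map_chords ?g C') \<and> map_chords f (map_chords ?g C') = C'"
    using matching_map_chords[OF strict_mono_on_inv_into[OF f] m] matching_subset_Times[OF m]
    by (force simp: map_chords_def image_image f_inv_into_f)
qed

lemma card_matchings_map_chords:
  assumes f: "strict_mono_on P f"
    and Q: "\<And>C. matching P C \<Longrightarrow> Q' (map_chords f C) \<longleftrightarrow> Q C"
  shows "card {C. matching P C \<and> Q C} = card {C'. matching (f ` P) C' \<and> Q' C'}"
proof (rule bij_betw_same_card[of "map_chords f"])
  show "bij_betw (map_chords f) {C. matching P C \<and> Q C} {C'. matching (f ` P) C' \<and> Q' C'}"
    unfolding bij_betw_def
  proof
    show "inj_on (map_chords f) {C. matching P C \<and> Q C}"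
      using map_chords_inj[OF f] matching_subset_Times unfolding inj_on_def by blast
    show "map_chords f ` {C. matching P C \<and> Q C} = {C'. matching (f ` P) C' \<and> Q' C'}"
    proof
      show "map_chords f ` {C. matching P C \<and> Q C} \<subseteq> {C'. matching (f ` P) C' \<and> Q' C'}"
        using matching_map_chords[OF f] Q by auto
      show "{C'. matching (f ` P) C' \<and> Q' C'} \<subseteq> map_chords f ` {C. matching P C \<and> Q C}"
      proof
        fix C' assume "C' \<in> {C'. matching (f ` P) C' \<and> Q' C'}"
        then obtain C where "matching P C" "map_chords f C = C'" "Q' C'" using matching_map_chords_surj[OF f] by blast
        then show "C' \<in> map_chords f ` {C. matching P C \<and> Q C}" using Q by auto
      qed
    qed
  qed
qed

lemma crosses_map:
  assumes f: "strict_mono_on P f" and "fst x \<in> P" "snd x \<in> P" "fst y \<in> P" "snd y \<in> P"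
  shows "crosses (f (fst x), f (snd x)) (f (fst y), f (snd y)) \<longleftrightarrow> crosses x y"
proof -
  obtain a b c d where xy: "x = (a,b)" "y = (c,d)" by (cases x, cases y) auto
  have P: "a \<in> P" "b \<in> P" "c \<in> P" "d \<in> P" using assms xy by auto
  show ?thesis unfolding xy crosses_def using P f by (simp add: strict_mono_on_less)
qed

lemma cross_connected_map_chords:
  assumes f: "strict_mono_on P f" and m: "matching P C"
  shows "cross_connected (map_chords f C) \<longleftrightarrow> cross_connected C"
proof -
  let ?g = "\<lambda>c. (f (fst c), f (snd c))"
  have C_in: "fst c \<in> P" "snd c \<in> P" if "c \<in> C" for c
    using matching_chordD[OF m that] by auto
  have "inj_on ?g C"
  proof (rule inj_onI)
    fix x y assume xy: "x \<in> C" "y \<in> C" "?g x = ?g y"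
    have "inj_on f P" using strict_mono_on_imp_inj_on[OF f] .
    then have "fst x = fst y" "snd x = snd y"
      using xy C_in[OF xy(1)] C_in[OF xy(2)] unfolding inj_on_def by auto
    then show "x = y" by (simp add: prod_eq_iff)
  qed
  moreover have "crosses (?g x) (?g y) \<longleftrightarrow> crosses x y" if "x \<in> C" "y \<in> C" for x y
    using crosses_map[OF f] C_in that by blast
  ultimately show ?thesis
    unfolding map_chords_def by (rule cross_connected_image)
qed

lemma card_matchings_standard:
  assumes P: "finite P"
    and Q: "\<And>f C. strict_mono_on {..<card P} f \<Longrightarrow> matching {..<card P} C \<Longrightarrow>
              Q (map_chords f C) \<longleftrightarrow> Q C"
  shows "card {C. matching P C \<and> Q C} = card {C. matching {..<card P} C \<and> Q C}"
proof -
  obtain h where h: "bij_betw h {..<card P} P" "strict_mono_on {..<card P} h"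
    using ex_bij_betw_strict_mono_card[OF P] by blast
  have "h ` {..<card P} = P" using h(1) by (simp add: bij_betw_def)
  then show ?thesis
    using card_matchings_map_chords[OF h(2), of Q Q] Q[OF h(2)] by simp
qed

definition n_matchings :: "nat \<Rightarrow> nat" where
  "n_matchings n = card {C. matching {..<n} C}"

definition n_connected :: "nat \<Rightarrow> nat" where
  "n_connected n = card {C. matching {..<n} C \<and> cross_connected C}"

lemma card_matchings: "finite P \<Longrightarrow> card {C. matching P C} = n_matchings (card P)"
  using card_matchings_standard[of P "\<lambda>_. True"] by (simp add: n_matchings_def)

lemma card_connected_matchings:
  "finite P \<Longrightarrow> card {C. matching P C \<and> cross_connected C} = n_connected (card P)"
  using card_matchings_standard[of P cross_connected] cross_connected_map_chords
  by (simp add: n_connected_def)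

lemma n_matchings_0: "n_matchings 0 = 1"
proof -
  have "{C. matching {} C} = {{}}" using matching_empty_points_iff by auto
  then show ?thesis unfolding n_matchings_def lessThan_0 by simp
qed

lemma n_matchings_odd: "odd n \<Longrightarrow> n_matchings n = 0"
  using no_matching_odd_card[of "{..<n}"] by (simp add: n_matchings_def)

lemma n_connected_odd: "odd n \<Longrightarrow> n_connected n = 0"
  using no_matching_odd_card[of "{..<n}"] by (simp add: n_connected_def)

lemma n_connected_0: "n_connected 0 = 0"
  unfolding n_connected_def cross_connected_def using matching_empty_points_iff by simp

lemma card_matchings_containing_chord:
  assumes P: "finite P" and ab: "a < b" "a \<in> P" "b \<in> P"
  shows "card {C. matching P C \<and> (a, b) \<in> C} = n_matchings (card P - 2)"
proof -
  have "bij_betw (\<lambda>C. C - {(a, b)}) {C. matching P C \<and> (a, b) \<in> C} {C. matching (P - {a, b}) C}"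
  proof (rule bij_betw_byWitness[where f' = "insert (a, b)"])
    show "\<forall>C\<in>{C. matching P C \<and> (a, b) \<in> C}. insert (a, b) (C - {(a, b)}) = C" by auto
    show "\<forall>C\<in>{C. matching (P - {a, b}) C}. insert (a, b) C - {(a, b)} = C"
    proof
      fix C assume "C \<in> {C. matching (P - {a, b}) C}"
      then have "(a, b) \<notin> C" using matching_chordD[of "P - {a, b}" C "(a, b)"] by auto
      then show "insert (a, b) C - {(a, b)} = C" by simp
    qed
    show "(\<lambda>C. C - {(a, b)}) ` {C. matching P C \<and> (a, b) \<in> C} \<subseteq> {C. matching (P - {a, b}) C}"
    proof clarify
      fix C assume "matching P C" "(a, b) \<in> C"
      then show "matching (P - {a, b}) (C - {(a, b)})"
        using matching_Diff[of P C "{(a, b)}"] by simp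
    qed
    have "matching P (insert (a, b) C)" if "matching (P - {a, b}) C" for C
    proof -
      have "matching ({a, b} \<union> (P - {a, b})) ({(a, b)} \<union> C)"
        by (rule matching_Un[OF matching_single_chord[OF ab(1)] that]) auto
      moreover have "{a, b} \<union> (P - {a, b}) = P" using ab by auto
      ultimately show ?thesis by simp
    qed
    then show "insert (a, b) ` {C. matching (P - {a, b}) C} \<subseteq> {C. matching P C \<and> (a, b) \<in> C}"
      by auto
  qed
  then have "card {C. matching P C \<and> (a, b) \<in> C} = card {C. matching (P - {a, b}) C}"
    by (rule bij_betw_same_card)
  also have "\<dots> = n_matchings (card P - 2)"
    using card_matchings[of "P - {a, b}"] P ab by (simp add: card_Diff_subset numeral_2_eq_2)
  finally show ?thesis .
qed

text \<open>The point \<open>0\<close> is matched to one of the other \<open>n + 1\<close> points.\<close>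

lemma n_matchings_Suc_Suc: "n_matchings (Suc (Suc n)) = Suc n * n_matchings n"
proof -
  define P where "P = {..<Suc (Suc n)}"
  define A where "A q = {C. matching P C \<and> (0, q) \<in> C}" for q
  have cover: "{C. matching P C} = (\<Union>q\<in>{1..<Suc (Suc n)}. A q)"
  proof
    show "{C. matching P C} \<subseteq> (\<Union>q\<in>{1..<Suc (Suc n)}. A q)"
    proof
      fix C assume "C \<in> {C. matching P C}"
      then have m: "matching P C" by simp
      obtain c where c: "c \<in> C" "0 = fst c \<or> 0 = snd c"
        using matching_unique_chord[OF m, of 0] unfolding P_def by auto
      have "fst c < snd c" "snd c \<in> P" using matching_chordD[OF m c(1)] by auto
      then have "fst c = 0" "snd c \<in> {1..<Suc (Suc n)}" using c(2) unfolding P_def by auto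
      then have "C \<in> A (snd c)" using m c(1) unfolding A_def by (metis mem_Collect_eq prod.collapse)
      moreover have "snd c \<in> {1..<Suc (Suc n)}" by fact
      ultimately show "C \<in> (\<Union>q\<in>{1..<Suc (Suc n)}. A q)" by blast
    qed
    show "(\<Union>q\<in>{1..<Suc (Suc n)}. A q) \<subseteq> {C. matching P C}" unfolding A_def by blast
  qed
  have "A q \<inter> A q' = {}" if "q \<noteq> q'" for q q'
  proof (rule ccontr)
    assume "A q \<inter> A q' \<noteq> {}"
    then obtain C where C: "matching P C" "(0, q) \<in> C" "(0, q') \<in> C" unfolding A_def by blast
    then have "chord_ends (0, q) \<inter> chord_ends (0, q') = {}"
      using that unfolding matching_iff_disjoint chords_disjoint_def by blast
    then show False unfolding chord_ends_def by auto
  qed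
  moreover have "finite (A q)" for q
    using finite_matchings[of P] unfolding A_def P_def by (rule finite_subset[rotated]) auto
  ultimately have "n_matchings (Suc (Suc n)) = (\<Sum>q\<in>{1..<Suc (Suc n)}. card (A q))"
    unfolding n_matchings_def P_def[symmetric] cover by (intro card_UN_disjoint) auto
  also have "\<dots> = (\<Sum>q\<in>{1..<Suc (Suc n)}. n_matchings n)"
    using card_matchings_containing_chord[of P 0] unfolding A_def P_def by (intro sum.cong) auto
  finally show ?thesis by simp
qed

section \<open>Indecomposable diagrams\<close>

lemma chord_diagram_iff_matching: "chord_diagram n C \<longleftrightarrow> matching {1..2*n} C"
  unfolding chord_diagram_def matching_def by (auto split: prod.splits)

definition splits_at :: "(nat \<times> nat) set \<Rightarrow> nat \<Rightarrow> bool" where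
  "splits_at C k \<longleftrightarrow> (\<exists>S\<subseteq>C. {1..2*k} = points S)"

definition first_split :: "(nat \<times> nat) set \<Rightarrow> nat \<Rightarrow> bool" where
  "first_split C k \<longleftrightarrow> 0 < k \<and> splits_at C k \<and> (\<forall>j. 0 < j \<and> j < k \<longrightarrow> \<not> splits_at C j)"

lemma indecomposable_iff_splits_at:
  "indecomposable k C \<longleftrightarrow> 0 < k \<and> \<not> (\<exists>j. 0 < j \<and> j < k \<and> splits_at C j)"
  unfolding indecomposable_def splits_at_def UN_chord_ends_eq_points ..

lemma first_split_unique: "first_split C k \<Longrightarrow> first_split C k' \<Longrightarrow> k = k'"
  unfolding first_split_def by (metis linorder_neqE_nat)

lemma ex_first_split:
  assumes m: "matching {1..2*n} C" and "0 < n"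
  shows "\<exists>k\<in>{1..n}. first_split C k"
proof -
  have n: "0 < n \<and> splits_at C n" using assms matching_points[OF m] unfolding splits_at_def by blast
  define k where "k = (LEAST k. 0 < k \<and> splits_at C k)"
  have k: "0 < k \<and> splits_at C k" unfolding k_def by (rule LeastI[of _ n]) (rule n)
  have "k \<le> n" unfolding k_def by (rule Least_le) (rule n)
  moreover have "\<not> splits_at C j" if "0 < j" "j < k" for j
    using that not_less_Least[of j "\<lambda>k. 0 < k \<and> splits_at C k"] unfolding k_def by blast
  ultimately show ?thesis using k unfolding first_split_def by force
qed

lemma splits_at_Un:
  assumes m2: "matching {2*k+1..2*n} C2" and "j \<le> k"
  shows "splits_at (C1 \<union> C2) j \<longleftrightarrow> splits_at C1 j"
proof
  assume "splits_at (C1 \<union> C2) j"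
  then obtain S where S: "S \<subseteq> C1 \<union> C2" "{1..2*j} = points S" unfolding splits_at_def by blast
  have "c \<notin> C2" if "c \<in> S" for c
  proof
    assume "c \<in> C2"
    then have "2*k+1 \<le> fst c" using matching_chordD[OF m2] by auto
    moreover have "fst c \<le> 2*j" using S(2) that in_points_iff by (metis atLeastAtMost_iff)
    ultimately show False using \<open>j \<le> k\<close> by simp
  qed
  then show "splits_at C1 j" using S unfolding splits_at_def by blast
next
  assume "splits_at C1 j"
  then show "splits_at (C1 \<union> C2) j" unfolding splits_at_def by blast
qed

lemma first_split_Un:
  assumes m1: "matching {1..2*k} C1" and "indecomposable k C1" and m2: "matching {2*k+1..2*n} C2"
  shows "first_split (C1 \<union> C2) k"
proof -
  have "splits_at C1 k" unfolding splits_at_def using matching_points[OF m1] by blast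
  then show ?thesis
    using splits_at_Un[OF m2] assms(2) unfolding first_split_def indecomposable_iff_splits_at
    by (metis less_or_eq_imp_le)
qed

lemma first_split_decomposition:
  assumes m: "matching {1..2*n} C" and f: "first_split C k"
  obtains C1 C2 where "C = C1 \<union> C2" "matching {1..2*k} C1" "indecomposable k C1"
    "matching {2*k+1..2*n} C2"
proof -
  obtain S where S: "S \<subseteq> C" "{1..2*k} = points S"
    using f unfolding first_split_def splits_at_def by blast
  have "{1..2*k} \<subseteq> {1..2*n}" using S matching_points[OF m] points_mono by metis
  then have rest: "{1..2*n} - {1..2*k} = {2*k+1..2*n}" by auto
  have "matching {1..2*k} S" using matching_points_subset[OF m S(1)] S(2) by simp
  moreover have "matching {2*k+1..2*n} (C - S)"
    using matching_Diff[OF m S(1)] S(2) rest by simp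
  moreover have "indecomposable k S"
    using f S(1) unfolding indecomposable_iff_splits_at first_split_def splits_at_def
    by (meson order_trans)
  moreover have "C = S \<union> (C - S)" using S(1) by blast
  ultimately show ?thesis using that by blast
qed

lemma bij_first_split:
  assumes "k \<le> n"
  shows "bij_betw (\<lambda>(C1, C2). C1 \<union> C2)
     ({C1. matching {1..2*k} C1 \<and> indecomposable k C1} \<times> {C2. matching {2*k+1..2*n} C2})
     {C. matching {1..2*n} C \<and> first_split C k}"
proof -
  have split: "{1..2*k} \<union> {2*k+1..2*n} = {1..2*n::nat}" "{1..2*k} \<inter> {2*k+1..2*n} = ({}::nat set)"
    using assms by auto
  show ?thesis
    unfolding bij_betw_def
  proof
    show "inj_on (\<lambda>(C1, C2). C1 \<union> C2)
      ({C1. matching {1..2*k} C1 \<and> indecomposable k C1} \<times> {C2. matching {2*k+1..2*n} C2})"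
      by (rule inj_on_Un_matchings[OF split(2)]) auto
    show "(\<lambda>(C1, C2). C1 \<union> C2) `
      ({C1. matching {1..2*k} C1 \<and> indecomposable k C1} \<times> {C2. matching {2*k+1..2*n} C2})
      = {C. matching {1..2*n} C \<and> first_split C k}"
    proof
      show "(\<lambda>(C1, C2). C1 \<union> C2) `
        ({C1. matching {1..2*k} C1 \<and> indecomposable k C1} \<times> {C2. matching {2*k+1..2*n} C2})
        \<subseteq> {C. matching {1..2*n} C \<and> first_split C k}"
        using matching_Un[OF _ _ split(2)] split(1) first_split_Un by auto
      show "{C. matching {1..2*n} C \<and> first_split C k} \<subseteq> (\<lambda>(C1, C2). C1 \<union> C2) `
        ({C1. matching {1..2*k} C1 \<and> indecomposable k C1} \<times> {C2. matching {2*k+1..2*n} C2})"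
      proof clarify
        fix C assume "matching {1..2*n} C" "first_split C k"
        then obtain C1 C2 where "C = C1 \<union> C2" "matching {1..2*k} C1" "indecomposable k C1"
          "matching {2*k+1..2*n} C2"
          by (rule first_split_decomposition)
        then show "C \<in> (\<lambda>(C1, C2). C1 \<union> C2) `
          ({C1. matching {1..2*k} C1 \<and> indecomposable k C1} \<times> {C2. matching {2*k+1..2*n} C2})"
          by blast
      qed
    qed
  qed
qed

definition n_indecomposable :: "nat \<Rightarrow> nat" where
  "n_indecomposable k = card {C. chord_diagram k C \<and> indecomposable k C}"

lemma card_first_split:
  assumes "k \<le> n"
  shows "card {C. matching {1..2*n} C \<and> first_split C k} = n_indecomposable k * n_matchings (2*(n-k))"
proof -
  have "card {C. matching {1..2*n} C \<and> first_split C k} =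
    card ({C1. matching {1..2*k} C1 \<and> indecomposable k C1} \<times> {C2. matching {2*k+1..2*n} C2})"
    using bij_betw_same_card[OF bij_first_split[OF assms]] by simp
  also have "\<dots> = n_indecomposable k * card {C2. matching {2*k+1..2*n} C2}"
    unfolding n_indecomposable_def chord_diagram_iff_matching card_cartesian_product by simp
  also have "card {C2. matching {2*k+1..2*n} C2} = n_matchings (2*(n-k))"
    using card_matchings[of "{2*k+1..2*n}"] assms by (simp add: diff_mult_distrib2)
  finally show ?thesis .
qed

lemma n_matchings_first_split_sum:
  assumes "0 < n"
  shows "n_matchings (2*n) = (\<Sum>k=1..n. n_indecomposable k * n_matchings (2*(n-k)))"
proof -
  define A where "A k = {C. matching {1..2*n} C \<and> first_split C k}" for k
  have "{C. matching {1..2*n} C} = (\<Union>k\<in>{1..n}. A k)"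
    using ex_first_split[OF _ assms] unfolding A_def by blast
  moreover have "A k \<inter> A k' = {}" if "k \<noteq> k'" for k k'
    using first_split_unique that unfolding A_def by blast
  moreover have "finite (A k)" for k
    using finite_matchings[of "{1..2*n}"] unfolding A_def by (rule finite_subset[rotated]) auto
  ultimately have "card {C. matching {1..2*n} C} = (\<Sum>k\<in>{1..n}. card (A k))"
    by (simp add: card_UN_disjoint)
  also have "\<dots> = (\<Sum>k=1..n. n_indecomposable k * n_matchings (2*(n-k)))"
    unfolding A_def by (intro sum.cong refl card_first_split) simp
  finally show ?thesis using card_matchings[of "{1..2*n}"] by simp
qed

section \<open>The root component\<close>

definition in_gaps :: "nat set \<Rightarrow> (nat \<times> nat) set \<Rightarrow> bool" where
  "in_gaps S H \<longleftrightarrow> (\<forall>c\<in>H. \<forall>s\<in>S. \<not> (fst c < s \<and> s < snd c))"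

definition root_chord :: "nat set \<Rightarrow> (nat \<times> nat) set \<Rightarrow> nat \<times> nat" where
  "root_chord P G = (THE c. c \<in> G \<and> fst c = Min P)"

definition root_component :: "nat set \<Rightarrow> (nat \<times> nat) set \<Rightarrow> (nat \<times> nat) set" where
  "root_component P G = component G (root_chord P G)"

lemma ex1_root_chord:
  assumes m: "matching P G" and "finite P" "P \<noteq> {}"
  shows "\<exists>!c\<in>G. fst c = Min P"
proof -
  have "Min P \<in> P" using assms by simp
  have "fst c = Min P" if "c \<in> G" "Min P = fst c \<or> Min P = snd c" for c
  proof -
    have "fst c < snd c" "fst c \<in> P" using matching_chordD[OF m that(1)] by auto
    then show ?thesis using that(2) Min_le[OF \<open>finite P\<close>, of "fst c"] by linarith
  qed
  then show ?thesis using matching_unique_chord[OF m \<open>Min P \<in> P\<close>] by metis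
qed

lemma root_chord:
  "matching P G \<Longrightarrow> finite P \<Longrightarrow> P \<noteq> {} \<Longrightarrow> root_chord P G \<in> G \<and> fst (root_chord P G) = Min P"
  unfolding root_chord_def by (rule theI'[OF ex1_root_chord])

lemma root_chord_eq:
  "matching P G \<Longrightarrow> finite P \<Longrightarrow> P \<noteq> {} \<Longrightarrow> c \<in> G \<Longrightarrow> fst c = Min P \<Longrightarrow> root_chord P G = c"
  using ex1_root_chord root_chord by metis

lemma noncrossing_in_gaps:
  assumes R: "matching S R" and H: "in_gaps S H"
  shows "noncrossing R H"
  unfolding noncrossing_def
proof (intro ballI notI)
  fix x y assume x: "x \<in> R" and y: "y \<in> H" and "crosses x y"
  moreover have "fst x \<in> S" "snd x \<in> S" using matching_chordD[OF R x] by auto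
  ultimately show False using H y unfolding in_gaps_def crosses_iff by blast
qed

lemma not_crosses_inside_outside:
  assumes "fst y < snd y" "fst z < snd z" "\<not> crosses y c"
    and "fst y \<notin> {fst c, snd c}" "snd y \<notin> {fst c, snd c}"
    and "\<not> (fst c < fst y \<and> snd y < snd c)" "fst c < fst z" "snd z < snd c"
  shows "\<not> crosses y z"
  using assms unfolding crosses_iff by auto

lemma inside_if_endpoint_inside:
  assumes "fst x < snd x" "\<not> crosses x c" "fst x \<notin> {fst c, snd c}" "snd x \<notin> {fst c, snd c}"
    and "s = fst x \<or> s = snd x" "fst c < s" "s < snd c"
  shows "fst c < fst x \<and> snd x < snd c"
  using assms unfolding crosses_iff by auto

lemma in_gaps_root_component:
  assumes m: "matching P G" and fin: "finite P" and ne: "P \<noteq> {}"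
  shows "in_gaps (points (root_component P G)) (G - root_component P G)"
  unfolding in_gaps_def
proof (intro ballI notI)
  let ?c0 = "root_chord P G" and ?R = "root_component P G"
  have c0: "?c0 \<in> G" "fst ?c0 = Min P" using root_chord[OF m fin ne] by auto
  have RG: "?R \<subseteq> G" unfolding root_component_def by (rule component_subset[OF c0(1)])
  have c0R: "?c0 \<in> ?R" unfolding root_component_def by (rule component_self)
  have closed: "noncrossing ?R (G - ?R)"
    unfolding root_component_def by (rule noncrossing_component[OF c0(1)])
  have conn: "cross_connected ?R"
    unfolding root_component_def by (rule cross_connected_component[OF c0(1)])
  fix c s assume c: "c \<in> G - ?R" and "s \<in> points ?R" and s: "fst c < s \<and> s < snd c"
  then obtain x where x: "x \<in> ?R" "s = fst x \<or> s = snd x" by (auto simp: in_points_iff)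
  have chords_R: "fst y < snd y" "\<not> crosses y c" "fst y \<notin> {fst c, snd c}" "snd y \<notin> {fst c, snd c}"
    if "y \<in> ?R" for y
  proof -
    have "y \<in> G" "y \<noteq> c" using that c RG by auto
    then have "chord_ends y \<inter> chord_ends c = {}"
      using m c unfolding matching_iff_disjoint chords_disjoint_def by blast
    then show "fst y \<notin> {fst c, snd c}" "snd y \<notin> {fst c, snd c}" unfolding chord_ends_def by auto
    show "fst y < snd y" using matching_chordD[OF m \<open>y \<in> G\<close>] by simp
    show "\<not> crosses y c" using closed that c unfolding noncrossing_def by blast
  qed
  txt \<open>The chords of \<open>?R\<close> nested inside \<open>c\<close> cannot cross the others, so by connectedness
    they are all of \<open>?R\<close>; but the root chord starts at \<open>Min P\<close>, outside \<open>c\<close>.\<close>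
  define X where "X = {y \<in> ?R. fst c < fst y \<and> snd y < snd c}"
  have "x \<in> X"
    using inside_if_endpoint_inside[OF chords_R[OF x(1)] x(2)] s x(1) unfolding X_def by blast
  moreover have "noncrossing X (?R - X)"
    unfolding noncrossing_def
  proof (intro ballI notI)
    fix y z assume y: "y \<in> X" and z: "z \<in> ?R - X" and "crosses y z"
    then have "crosses z y" using crosses_sym by blast
    moreover have "\<not> crosses z y"
      by (rule not_crosses_inside_outside[OF chords_R(1)[of z] chords_R(1)[of y] chords_R(2-4)[of z]])
        (use y z in \<open>auto simp: X_def\<close>)
    ultimately show False by blast
  qed
  moreover have "X \<subseteq> ?R" unfolding X_def by blast
  ultimately have "X = ?R" using conn unfolding cross_connected_def by blast
  moreover have "fst c \<in> P" using matching_chordD[OF m] c by blast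
  then have "?c0 \<notin> X" using c0(2) Min_le[OF fin \<open>fst c \<in> P\<close>] unfolding X_def by auto
  ultimately show False using c0R by blast
qed

lemma root_component_decomposition:
  assumes m: "matching P G" and fin: "finite P" and ne: "P \<noteq> {}"
  defines "R \<equiv> root_component P G"
  shows "points R \<subseteq> P" "Min P \<in> points R" "matching (points R) R" "cross_connected R"
    "matching (P - points R) (G - R)" "in_gaps (points R) (G - R)" "G = R \<union> (G - R)"
proof -
  have c0: "root_chord P G \<in> G" "fst (root_chord P G) = Min P" using root_chord[OF m fin ne] by auto
  have RG: "R \<subseteq> G" unfolding R_def root_component_def using component_subset[OF c0(1)] .
  show "points R \<subseteq> P" using points_mono[OF RG] matching_points[OF m] by simp
  show "Min P \<in> points R"
    using component_self c0 in_points_iff unfolding R_def root_component_def by metis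
  show "matching (points R) R" by (rule matching_points_subset[OF m RG])
  show "cross_connected R" unfolding R_def root_component_def by (rule cross_connected_component[OF c0(1)])
  show "matching (P - points R) (G - R)" by (rule matching_Diff[OF m RG])
  show "in_gaps (points R) (G - R)" unfolding R_def by (rule in_gaps_root_component[OF m fin ne])
  show "G = R \<union> (G - R)" using RG by blast
qed

lemma root_component_Un:
  assumes fin: "finite P" and S: "S \<subseteq> P" "Min P \<in> S" and R: "matching S R" "cross_connected R"
    and H: "matching (P - S) H" "in_gaps S H"
  shows "matching P (R \<union> H)" "root_component P (R \<union> H) = R"
    "num_components (R \<union> H) = Suc (num_components H)"
proof -
  have ne: "P \<noteq> {}" using S by blast
  have split: "S \<union> (P - S) = P" "S \<inter> (P - S) = {}" using S by auto
  show m: "matching P (R \<union> H)" using matching_Un[OF R(1) H(1) split(2)] split(1) by simp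
  have nc: "noncrossing R H" by (rule noncrossing_in_gaps[OF R(1) H(2)])
  have finR: "finite R" using finite_matching[OF _ R(1)] S fin finite_subset by blast
  have finH: "finite H" using finite_matching[OF _ H(1)] fin by blast
  have RH: "R \<inter> H = {}"
    using matching_chordD[OF R(1)] matching_chordD[OF H(1)] by blast
  obtain c where "c \<in> R" "Min P = fst c \<or> Min P = snd c"
    using matching_unique_chord[OF R(1) S(2)] by blast
  moreover have "fst c < snd c" "Min P \<le> fst c"
    using matching_chordD[OF R(1) \<open>c \<in> R\<close>] S(1) Min_le[OF fin] by auto
  ultimately have c: "c \<in> R" "fst c = Min P" by auto
  have "root_chord P (R \<union> H) = c" using root_chord_eq[OF m fin ne, of c] c by simp
  moreover have "noncrossing R ((R \<union> H) - R)" using nc unfolding noncrossing_def by blast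
  then have "component (R \<union> H) c = R"
    using component_of_noncrossing_part[of R "R \<union> H" c] c(1) component_eq_if_cross_connected[OF R(2)]
    by blast
  ultimately show "root_component P (R \<union> H) = R" unfolding root_component_def by simp
  have "num_components R = 1" using num_components_eq_1_iff[OF finR] R(2) by simp
  then show "num_components (R \<union> H) = Suc (num_components H)"
    using num_components_Un[OF finR finH RH nc] by simp
qed

lemma bij_root_decomposition:
  assumes fin: "finite P" and S: "S \<subseteq> P" "Min P \<in> S"
  shows "bij_betw (\<lambda>(R, H). R \<union> H)
    ({R. matching S R \<and> cross_connected R} \<times>
     {H. matching (P - S) H \<and> in_gaps S H \<and> \<Phi> (Suc (num_components H))})
    {G. matching P G \<and> \<Phi> (num_components G) \<and> points (root_component P G) = S}"
  (is "bij_betw _ (?Conn \<times> ?Gaps) ?A")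
  unfolding bij_betw_def
proof
  have ne: "P \<noteq> {}" using S by blast
  show "inj_on (\<lambda>(R, H). R \<union> H) (?Conn \<times> ?Gaps)"
    by (rule inj_on_Un_matchings[of S "P - S"]) auto
  show "(\<lambda>(R, H). R \<union> H) ` (?Conn \<times> ?Gaps) = ?A"
  proof
    show "(\<lambda>(R, H). R \<union> H) ` (?Conn \<times> ?Gaps) \<subseteq> ?A"
    proof clarify
      fix R H assume R: "matching S R" "cross_connected R"
        and H: "matching (P - S) H" "in_gaps S H" "\<Phi> (Suc (num_components H))"
      note RH = root_component_Un[OF fin S R H(1,2)]
      show "matching P (R \<union> H) \<and> \<Phi> (num_components (R \<union> H)) \<and>
          points (root_component P (R \<union> H)) = S"
        using RH H(3) matching_points[OF R(1)] by simp
    qed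
    show "?A \<subseteq> (\<lambda>(R, H). R \<union> H) ` (?Conn \<times> ?Gaps)"
    proof
      fix G assume "G \<in> ?A"
      then have G: "matching P G" "\<Phi> (num_components G)" "points (root_component P G) = S"
        by auto
      let ?R = "root_component P G"
      note d = root_component_decomposition[OF G(1) fin ne]
      have "num_components G = Suc (num_components (G - ?R))"
        using root_component_Un(3)[OF fin d(1,2,3,4,5,6)] d(7) by simp
      then have "(?R, G - ?R) \<in> ?Conn \<times> ?Gaps" using d G(2,3) by simp
      moreover have "G = (\<lambda>(R, H). R \<union> H) (?R, G - ?R)" using d(7) by simp
      ultimately show "G \<in> (\<lambda>(R, H). R \<union> H) ` (?Conn \<times> ?Gaps)" by (rule rev_image_eqI)
    qed
  qed
qed

lemma card_matchings_by_root:
  assumes fin: "finite P" and ne: "P \<noteq> {}"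
  shows "card {G. matching P G \<and> \<Phi> (num_components G)} =
   (\<Sum>S\<in>{S. S \<subseteq> P \<and> Min P \<in> S}. n_connected (card S) *
      card {H. matching (P - S) H \<and> in_gaps S H \<and> \<Phi> (Suc (num_components H))})"
proof -
  define A where
    "A S = {G. matching P G \<and> \<Phi> (num_components G) \<and> points (root_component P G) = S}" for S
  have "{G. matching P G \<and> \<Phi> (num_components G)} = (\<Union>S\<in>{S. S \<subseteq> P \<and> Min P \<in> S}. A S)"
  proof
    show "{G. matching P G \<and> \<Phi> (num_components G)} \<subseteq> (\<Union>S\<in>{S. S \<subseteq> P \<and> Min P \<in> S}. A S)"
    proof
      fix G assume "G \<in> {G. matching P G \<and> \<Phi> (num_components G)}"
      then have G: "matching P G" "\<Phi> (num_components G)" by auto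
      note d = root_component_decomposition[OF G(1) fin ne]
      have "G \<in> A (points (root_component P G))" using G unfolding A_def by simp
      then show "G \<in> (\<Union>S\<in>{S. S \<subseteq> P \<and> Min P \<in> S}. A S)" using d(1,2) by blast
    qed
    show "(\<Union>S\<in>{S. S \<subseteq> P \<and> Min P \<in> S}. A S) \<subseteq> {G. matching P G \<and> \<Phi> (num_components G)}"
      unfolding A_def by blast
  qed
  moreover have "finite (A S)" for S
    using finite_matchings[OF fin] unfolding A_def by (rule finite_subset[rotated]) blast
  moreover have "A S \<inter> A S' = {}" if "S \<noteq> S'" for S S'
    using that unfolding A_def by blast
  ultimately have "card {G. matching P G \<and> \<Phi> (num_components G)} =
    (\<Sum>S\<in>{S. S \<subseteq> P \<and> Min P \<in> S}. card (A S))"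
    using fin by (simp add: card_UN_disjoint)
  also have "\<dots> = (\<Sum>S\<in>{S. S \<subseteq> P \<and> Min P \<in> S}. n_connected (card S) *
      card {H. matching (P - S) H \<and> in_gaps S H \<and> \<Phi> (Suc (num_components H))})"
  proof (rule sum.cong[OF refl])
    fix S assume S: "S \<in> {S. S \<subseteq> P \<and> Min P \<in> S}"
    then have "finite S" using fin finite_subset by blast
    then show "card (A S) = n_connected (card S) *
      card {H. matching (P - S) H \<and> in_gaps S H \<and> \<Phi> (Suc (num_components H))}"
      using bij_betw_same_card[OF bij_root_decomposition[OF fin, of S \<Phi>]] S
        card_connected_matchings[of S]
      unfolding A_def card_cartesian_product by simp
  qed
  finally show ?thesis .
qed

section \<open>Filling the gaps of the root component\<close>

definition gap_fillings :: "(nat \<Rightarrow> bool) \<Rightarrow> nat \<Rightarrow> nat \<Rightarrow> nat set \<Rightarrow> (nat \<times> nat) set set" where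
  "gap_fillings \<Phi> a b S = {H. matching ({a..<b} - S) H \<and> in_gaps S H \<and> \<Phi> (num_components H)}"

lemma gap_fillings_singleton:
  "gap_fillings \<Phi> a b {a} = {H. matching {Suc a..<b} H \<and> \<Phi> (num_components H)}"
proof -
  have rest: "{a..<b} - {a} = {Suc a..<b}" by auto
  have "in_gaps {a} H" if "matching {Suc a..<b} H" for H
    unfolding in_gaps_def using matching_chordD[OF that] by fastforce
  then show ?thesis unfolding gap_fillings_def rest by blast
qed

lemma noncrossing_separated:
  assumes "\<forall>c\<in>H1. fst c < snd c \<and> snd c < t" "\<forall>c\<in>H2. t \<le> fst c"
  shows "noncrossing H1 H2"
  unfolding noncrossing_def
proof (intro ballI notI)
  fix x y assume "x \<in> H1" "y \<in> H2" "crosses x y"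
  moreover have "fst x < snd x" "snd x < t" using assms(1) \<open>x \<in> H1\<close> by auto
  moreover have "t \<le> fst y" using assms(2) \<open>y \<in> H2\<close> by auto
  ultimately show False unfolding crosses_iff by linarith
qed

text \<open>Here \<open>a' = Min S'\<close>, so the gaps of \<open>insert a S'\<close> are \<open>{Suc a..<a'}\<close> and the gaps of \<open>S'\<close>.\<close>

locale first_gap =
  fixes a a' b :: nat and S' :: "nat set"
  assumes a_less: "a < a'" and S': "S' \<subseteq> {a'..<b}" "a' \<in> S'"
begin

abbreviation "first_part \<equiv> {Suc a..<a'}"
abbreviation "rest_part \<equiv> {a'..<b} - S'"

lemma parts: "{a..<b} - insert a S' = first_part \<union> rest_part" "first_part \<inter> rest_part = {}"
  using a_less S' by auto

lemma noncrossing_parts: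
  assumes "matching first_part H1" "matching rest_part H2"
  shows "noncrossing H1 H2"
proof (rule noncrossing_separated[where t = a'])
  show "\<forall>c\<in>H1. fst c < snd c \<and> snd c < a'" using matching_chordD[OF assms(1)] by simp
  show "\<forall>c\<in>H2. a' \<le> fst c" using matching_chordD[OF assms(2)] by simp
qed

lemma num_components_parts_Un:
  assumes "matching first_part H1" "matching rest_part H2"
  shows "num_components (H1 \<union> H2) = num_components H1 + num_components H2"
proof (rule num_components_Un)
  show "finite H1" "finite H2" using finite_matching assms by blast+
  show "H1 \<inter> H2 = {}" using parts(2) matching_chordD assms by blast
  show "noncrossing H1 H2" using noncrossing_parts assms .
qed

lemma in_gaps_insert_Un:
  assumes "matching first_part H1" "matching rest_part H2" "in_gaps S' H2"
  shows "in_gaps (insert a S') (H1 \<union> H2)"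
  unfolding in_gaps_def
proof (intro ballI notI)
  fix c s assume c: "c \<in> H1 \<union> H2" and s: "s \<in> insert a S'" and cs: "fst c < s \<and> s < snd c"
  show False
  proof (cases "c \<in> H1")
    case True
    then have "Suc a \<le> fst c" "snd c < a'" using matching_chordD[OF assms(1) True] by auto
    moreover have "s = a \<or> a' \<le> s" using s S' by auto
    ultimately show False using cs by auto
  next
    case False
    then have c2: "c \<in> H2" using c by blast
    then have "s \<noteq> a" using matching_chordD[OF assms(2) c2] cs a_less by auto
    then show False using assms(3) c2 cs s unfolding in_gaps_def by blast
  qed
qed

lemma gap_fillings_insert_split:
  assumes m: "matching (first_part \<union> rest_part) H" and g: "in_gaps (insert a S') H"
  shows "matching first_part {c\<in>H. fst c \<in> first_part}"
    "matching rest_part {c\<in>H. fst c \<notin> first_part}"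
    "in_gaps S' {c\<in>H. fst c \<notin> first_part}"
proof -
  have "fst c \<in> first_part \<longleftrightarrow> snd c \<in> first_part" if c: "c \<in> H" for c
  proof -
    have "fst c < snd c" "fst c \<in> first_part \<union> rest_part" "snd c \<in> first_part \<union> rest_part"
      using matching_chordD[OF m c] by auto
    moreover have "\<not> (fst c < a' \<and> a' < snd c)" using g c S'(2) unfolding in_gaps_def by blast
    ultimately show ?thesis using S'(2) by auto
  qed
  then show "matching first_part {c\<in>H. fst c \<in> first_part}"
    "matching rest_part {c\<in>H. fst c \<notin> first_part}"
    using matching_split[OF m parts(2)] by blast+
  show "in_gaps S' {c\<in>H. fst c \<notin> first_part}" using g unfolding in_gaps_def by blast
qed

lemma bij_gap_fillings_insert:
  "bij_betw (\<lambda>(H1, H2). H1 \<union> H2)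
    {(H1, H2). matching first_part H1 \<and> matching rest_part H2 \<and> in_gaps S' H2 \<and>
       \<Phi> (num_components H1 + num_components H2)}
    (gap_fillings \<Phi> a b (insert a S'))"
  (is "bij_betw _ ?Pairs _")
  unfolding bij_betw_def
proof
  note comps = num_components_parts_Un
  show "inj_on (\<lambda>(H1, H2). H1 \<union> H2) ?Pairs"
    by (rule inj_on_Un_matchings[OF parts(2)]) auto
  show "(\<lambda>(H1, H2). H1 \<union> H2) ` ?Pairs = gap_fillings \<Phi> a b (insert a S')"
  proof
    show "(\<lambda>(H1, H2). H1 \<union> H2) ` ?Pairs \<subseteq> gap_fillings \<Phi> a b (insert a S')"
    proof clarify
      fix H1 H2 assume H: "matching first_part H1" "matching rest_part H2" "in_gaps S' H2"
        "\<Phi> (num_components H1 + num_components H2)"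
      show "H1 \<union> H2 \<in> gap_fillings \<Phi> a b (insert a S')"
        unfolding gap_fillings_def parts(1)
        using matching_Un[OF H(1,2) parts(2)] in_gaps_insert_Un[OF H(1-3)] comps[OF H(1,2)] H(4)
        by simp
    qed
    show "gap_fillings \<Phi> a b (insert a S') \<subseteq> (\<lambda>(H1, H2). H1 \<union> H2) ` ?Pairs"
    proof
      fix H assume "H \<in> gap_fillings \<Phi> a b (insert a S')"
      then have m: "matching (first_part \<union> rest_part) H" and g: "in_gaps (insert a S') H"
        and \<Phi>: "\<Phi> (num_components H)"
        unfolding gap_fillings_def parts(1) by auto
      let ?H1 = "{c\<in>H. fst c \<in> first_part}" and ?H2 = "{c\<in>H. fst c \<notin> first_part}"
      note split = gap_fillings_insert_split[OF m g]
      have H: "?H1 \<union> ?H2 = H" by blast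
      have "(?H1, ?H2) \<in> ?Pairs"
        using split \<Phi> comps[OF split(1,2)] unfolding H by simp
      moreover have "H = (\<lambda>(H1, H2). H1 \<union> H2) (?H1, ?H2)" using H by simp
      ultimately show "H \<in> (\<lambda>(H1, H2). H1 \<union> H2) ` ?Pairs" by (rule rev_image_eqI)
    qed
  qed
qed

end

definition anchored_subsets :: "nat \<Rightarrow> nat \<Rightarrow> nat \<Rightarrow> nat set set" where
  "anchored_subsets a b j = {S. S \<subseteq> {a..<b} \<and> a \<in> S \<and> card S = j}"

lemma finite_anchored_subsets: "finite (anchored_subsets a b j)"
  unfolding anchored_subsets_def by (rule finite_subset[of _ "Pow {a..<b}"]) auto

lemma anchored_subsets_1: "a < b \<Longrightarrow> anchored_subsets a b 1 = {{a}}"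
  unfolding anchored_subsets_def by (auto simp: card_1_singleton_iff)

lemma anchored_subsets_empty: "b - a < j \<Longrightarrow> anchored_subsets a b j = {}"
proof -
  assume j: "b - a < j"
  have "card S \<le> b - a" if "S \<subseteq> {a..<b}" for S
    using card_mono[OF _ that] by simp
  then have "\<not> (S \<subseteq> {a..<b} \<and> a \<in> S \<and> card S = j)" for S using j by (metis leD)
  then show ?thesis unfolding anchored_subsets_def by blast
qed

lemma anchored_subsets_Suc:
  assumes j: "1 \<le> j"
  shows "anchored_subsets a b (Suc j) = (\<Union>a'\<in>{Suc a..<b}. insert a ` anchored_subsets a' b j)"
proof
  show "anchored_subsets a b (Suc j) \<subseteq> (\<Union>a'\<in>{Suc a..<b}. insert a ` anchored_subsets a' b j)"
  proof
    fix S assume "S \<in> anchored_subsets a b (Suc j)"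
    then have S: "S \<subseteq> {a..<b}" "a \<in> S" "card S = Suc j" unfolding anchored_subsets_def by auto
    define S' where "S' = S - {a}"
    have fS: "finite S" using S(1) finite_subset by blast
    have cS': "card S' = j" unfolding S'_def using S fS by simp
    then have neS': "S' \<noteq> {}" using j by auto
    have fS': "finite S'" using fS unfolding S'_def by simp
    define a' where "a' = Min S'"
    have a'S': "a' \<in> S'" unfolding a'_def using fS' neS' by simp
    have a'r: "a' \<in> {Suc a..<b}" using a'S' S unfolding S'_def by auto
    have "S' \<subseteq> {a'..<b}"
    proof
      fix x assume x: "x \<in> S'"
      then have "a' \<le> x" unfolding a'_def using fS' by simp
      moreover have "x < b" using x S(1) unfolding S'_def by auto
      ultimately show "x \<in> {a'..<b}" by simp
    qed
    then have "S' \<in> anchored_subsets a' b j" unfolding anchored_subsets_def using a'S' cS' by blast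
    moreover have "S = insert a S'" unfolding S'_def using S(2) by blast
    ultimately show "S \<in> (\<Union>a'\<in>{Suc a..<b}. insert a ` anchored_subsets a' b j)" using a'r by blast
  qed
  show "(\<Union>a'\<in>{Suc a..<b}. insert a ` anchored_subsets a' b j) \<subseteq> anchored_subsets a b (Suc j)"
  proof
    fix S assume "S \<in> (\<Union>a'\<in>{Suc a..<b}. insert a ` anchored_subsets a' b j)"
    then obtain a' S' where a': "a' \<in> {Suc a..<b}" and S': "S' \<in> anchored_subsets a' b j" and SS': "S = insert a S'" by blast
    have h: "S' \<subseteq> {a'..<b}" "a' \<in> S'" "card S' = j" using S' unfolding anchored_subsets_def by auto
    have "a \<notin> S'" using h a' by auto
    moreover have "finite S'" using h(1) finite_subset by blast
    ultimately have "card S = Suc j" using h SS' by simp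
    moreover have "S \<subseteq> {a..<b}" using h(1) a' SS' by auto
    ultimately show "S \<in> anchored_subsets a b (Suc j)" unfolding anchored_subsets_def using SS' by blast
  qed
qed

lemma Min_anchored_subsets: "S \<in> anchored_subsets a b j \<Longrightarrow> Min S = a"
proof -
  assume "S \<in> anchored_subsets a b j"
  then have h: "S \<subseteq> {a..<b}" "a \<in> S" unfolding anchored_subsets_def by auto
  then have "finite S" using finite_subset by blast
  then show "Min S = a" using h by (intro Min_eqI) auto
qed

lemma sum_anchored_subsets_Suc:
  assumes j: "1 \<le> j"
  shows "(\<Sum>S\<in>anchored_subsets a b (Suc j). g S) = (\<Sum>a'\<in>{Suc a..<b}. \<Sum>S'\<in>anchored_subsets a' b j. g (insert a S'))"
proof -
  have disjoint_images: "insert a ` anchored_subsets a' b j \<inter> insert a ` anchored_subsets a'' b j = {}"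
    if "a' \<in> {Suc a..<b}" "a'' \<in> {Suc a..<b}" "a' \<noteq> a''" for a' a''
  proof (rule ccontr)
    assume "insert a ` anchored_subsets a' b j \<inter> insert a ` anchored_subsets a'' b j \<noteq> {}"
    then obtain S1 S2 where s: "S1 \<in> anchored_subsets a' b j" "S2 \<in> anchored_subsets a'' b j" "insert a S1 = insert a S2" by blast
    have "a \<notin> S1" "a \<notin> S2" using s that unfolding anchored_subsets_def by auto
    then have "S1 = S2" using s(3) by (metis insert_ident)
    moreover have "Min S1 = a'" "Min S2 = a''" using Min_anchored_subsets s(1,2) by auto
    ultimately show False using that by simp
  qed
  have inj: "inj_on (insert a) (anchored_subsets a' b j)" if "a' \<in> {Suc a..<b}" for a'
  proof (rule inj_onI)
    fix S1 S2 assume s: "S1 \<in> anchored_subsets a' b j" "S2 \<in> anchored_subsets a' b j" "insert a S1 = insert a S2"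
    have "a \<notin> S1" "a \<notin> S2" using s that unfolding anchored_subsets_def by auto
    then show "S1 = S2" using s(3) by (metis insert_ident)
  qed
  have "(\<Sum>S\<in>anchored_subsets a b (Suc j). g S) = (\<Sum>a'\<in>{Suc a..<b}. \<Sum>S\<in>insert a ` anchored_subsets a' b j. g S)"
    unfolding anchored_subsets_Suc[OF j] by (rule sum.UNION_disjoint) (auto simp: finite_anchored_subsets disjoint_images)
  also have "\<dots> = (\<Sum>a'\<in>{Suc a..<b}. \<Sum>S'\<in>anchored_subsets a' b j. g (insert a S'))"
    by (rule sum.cong[OF refl]) (simp add: sum.reindex[OF inj])
  finally show ?thesis .
qed

lemma sum_anchored_by_card:
  fixes h :: "nat \<Rightarrow> nat" and g :: "nat set \<Rightarrow> nat"
  assumes "a < b"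
  shows "(\<Sum>S\<in>{S. S \<subseteq> {a..<b} \<and> a \<in> S}. h (card S) * g S) =
         (\<Sum>j\<in>{1..b-a}. h j * (\<Sum>S\<in>anchored_subsets a b j. g S))"
proof -
  have "card S \<in> {1..b-a}" if "S \<subseteq> {a..<b}" "a \<in> S" for S
    using card_mono[OF _ that(1)] card_gt_0_iff[of S] finite_subset[OF that(1)] that(2) by auto
  then have cover: "{S. S \<subseteq> {a..<b} \<and> a \<in> S} = (\<Union>j\<in>{1..b-a}. anchored_subsets a b j)"
    unfolding anchored_subsets_def by auto
  have "(\<Sum>S\<in>{S. S \<subseteq> {a..<b} \<and> a \<in> S}. h (card S) * g S) =
        (\<Sum>j\<in>{1..b-a}. \<Sum>S\<in>anchored_subsets a b j. h (card S) * g S)"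
    unfolding cover
    by (rule sum.UNION_disjoint) (auto simp: finite_anchored_subsets anchored_subsets_def)
  also have "\<dots> = (\<Sum>j\<in>{1..b-a}. h j * (\<Sum>S\<in>anchored_subsets a b j. g S))"
    by (auto simp: sum_distrib_left anchored_subsets_def intro!: sum.cong)
  finally show ?thesis .
qed

lemma anchored_subsetsD: "S' \<in> anchored_subsets a' b j \<Longrightarrow> S' \<subseteq> {a'..<b} \<and> a' \<in> S'"
  unfolding anchored_subsets_def by auto

definition fillings_count :: "(nat \<Rightarrow> bool) \<Rightarrow> nat \<Rightarrow> nat \<Rightarrow> nat \<Rightarrow> nat" where
  "fillings_count \<Phi> a b j = (\<Sum>S\<in>anchored_subsets a b j. card (gap_fillings \<Phi> a b S))"

lemma fillings_count_eq_0: "b - a < j \<Longrightarrow> fillings_count \<Phi> a b j = 0"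
  unfolding fillings_count_def using anchored_subsets_empty by simp

lemma fillings_count_1:
  assumes "a < b"
  shows "fillings_count \<Phi> a b 1 = card {H. matching {Suc a..<b} H \<and> \<Phi> (num_components H)}"
  unfolding fillings_count_def anchored_subsets_1[OF assms] by (simp add: gap_fillings_singleton)

lemma card_empty_matching: "card {H. matching X H \<and> H = {}} = (if X = {} then 1 else 0)"
proof -
  have "{H. matching X H \<and> H = {}} = (if X = {} then {{}} else {})"
    using matching_empty_iff by auto
  then show ?thesis by simp
qed

lemma card_matchings_le_1_component:
  assumes "finite X"
  shows "card {H. matching X H \<and> num_components H \<le> 1} = (if X = {} then 1 else 0) + n_connected (card X)"
proof -
  have "{H. matching X H \<and> num_components H \<le> 1} =
      {H. matching X H \<and> H = {}} \<union> {H. matching X H \<and> cross_connected H}"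
    using num_components_le_1_iff finite_matching[OF assms] by blast
  moreover have "{H. matching X H \<and> H = {}} \<inter> {H. matching X H \<and> cross_connected H} = {}"
    unfolding cross_connected_def by blast
  moreover have "finite {H. matching X H \<and> H = {}}" "finite {H. matching X H \<and> cross_connected H}"
    using finite_matchings[OF assms] by (auto intro: finite_subset[rotated])
  ultimately show ?thesis
    using card_empty_matching[of X] card_connected_matchings[OF assms] by (simp add: card_Un_disjoint)
qed

context first_gap
begin

lemma card_gap_fillings_insert:
  "card (gap_fillings \<Phi> a b (insert a S')) =
    card {(H1, H2). matching first_part H1 \<and> matching rest_part H2 \<and> in_gaps S' H2 \<and>
       \<Phi> (num_components H1 + num_components H2)}"
  using bij_betw_same_card[OF bij_gap_fillings_insert] by simp

lemma card_gap_fillings_insert_all: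
  "card (gap_fillings (\<lambda>_. True) a b (insert a S')) =
    n_matchings (a' - Suc a) * card (gap_fillings (\<lambda>_. True) a' b S')"
proof -
  have "{(H1, H2). matching first_part H1 \<and> matching rest_part H2 \<and> in_gaps S' H2 \<and>
       (\<lambda>_. True) (num_components H1 + num_components H2)} =
     {H1. matching first_part H1} \<times> gap_fillings (\<lambda>_. True) a' b S'"
    unfolding gap_fillings_def by auto
  then show ?thesis
    using card_gap_fillings_insert[of "\<lambda>_. True"] card_matchings[of first_part]
    by (simp add: card_cartesian_product)
qed

text \<open>With at most one component in total, either the first gap is empty, or it is filled by a
  connected matching and all other gaps are empty.\<close>

lemma card_gap_fillings_insert_le_1:
  "card (gap_fillings (\<lambda>k. k \<le> 1) a b (insert a S')) =
     (if a' = Suc a then card (gap_fillings (\<lambda>k. k \<le> 1) a' b S') else 0) +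
     n_connected (a' - Suc a) * (if S' = {a'..<b} then 1 else 0)"
proof -
  define E1 where "E1 = {H1. matching first_part H1 \<and> H1 = {}}"
  define C1 where "C1 = {H1. matching first_part H1 \<and> cross_connected H1}"
  define E2 where "E2 = {H2. matching rest_part H2 \<and> in_gaps S' H2 \<and> H2 = {}}"
  define G where "G = gap_fillings (\<lambda>k. k \<le> 1) a' b S'"
  have "{(H1, H2). matching first_part H1 \<and> matching rest_part H2 \<and> in_gaps S' H2 \<and>
       num_components H1 + num_components H2 \<le> 1} = (E1 \<times> G) \<union> (C1 \<times> E2)"
  proof -
    have "num_components H1 + num_components H2 \<le> 1 \<longleftrightarrow>
        (H1 = {} \<and> num_components H2 \<le> 1) \<or> (cross_connected H1 \<and> H2 = {})"
      if "matching first_part H1" "matching rest_part H2" for H1 H2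
    proof -
      have "finite H1" "finite H2" using finite_matching that by blast+
      then show ?thesis
        using num_components_eq_0_iff num_components_eq_1_iff by (metis add_is_1 le_Suc_eq le_zero_eq One_nat_def add_is_0)
    qed
    then show ?thesis unfolding E1_def C1_def E2_def G_def gap_fillings_def by auto
  qed
  moreover have "finite E1" "finite C1" "finite G" "finite E2"
    unfolding E1_def C1_def G_def E2_def gap_fillings_def
    using finite_matchings[of first_part] finite_matchings[of rest_part]
    by (auto intro: finite_subset[rotated])
  moreover have "E1 \<times> G \<inter> C1 \<times> E2 = {}" unfolding E1_def C1_def cross_connected_def by blast
  moreover have "card E1 = (if a' = Suc a then 1 else 0)"
    unfolding E1_def using card_empty_matching[of first_part] a_less by auto
  moreover have "card C1 = n_connected (a' - Suc a)"
    unfolding C1_def using card_connected_matchings[of first_part] by simp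
  moreover have "card E2 = (if S' = {a'..<b} then 1 else 0)"
  proof -
    have "E2 = {H2. matching rest_part H2 \<and> H2 = {}}" unfolding E2_def in_gaps_def by auto
    moreover have "rest_part = {} \<longleftrightarrow> S' = {a'..<b}" using S' by auto
    ultimately show ?thesis using card_empty_matching[of rest_part] by simp
  qed
  ultimately show ?thesis
    using card_gap_fillings_insert[of "\<lambda>k. k \<le> 1"] unfolding G_def
    by (simp add: card_Un_disjoint card_cartesian_product)
qed

end

lemma fillings_count_all_Suc:
  assumes "1 \<le> j"
  shows "fillings_count (\<lambda>_. True) a b (Suc j) =
    (\<Sum>a'\<in>{Suc a..<b}. n_matchings (a' - Suc a) * fillings_count (\<lambda>_. True) a' b j)"
proof -
  have "fillings_count (\<lambda>_. True) a b (Suc j) = (\<Sum>a'\<in>{Suc a..<b}. \<Sum>S'\<in>anchored_subsets a' b j.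
      card (gap_fillings (\<lambda>_. True) a b (insert a S')))"
    unfolding fillings_count_def by (rule sum_anchored_subsets_Suc[OF assms])
  also have "\<dots> = (\<Sum>a'\<in>{Suc a..<b}. \<Sum>S'\<in>anchored_subsets a' b j.
      n_matchings (a' - Suc a) * card (gap_fillings (\<lambda>_. True) a' b S'))"
  proof (intro sum.cong refl)
    fix a' S' assume "a' \<in> {Suc a..<b}" and "S' \<in> anchored_subsets a' b j"
    then have "first_gap a a' b S'" by unfold_locales (auto dest: anchored_subsetsD)
    then show "card (gap_fillings (\<lambda>_. True) a b (insert a S')) =
        n_matchings (a' - Suc a) * card (gap_fillings (\<lambda>_. True) a' b S')"
      by (rule first_gap.card_gap_fillings_insert_all)
  qed
  finally show ?thesis unfolding fillings_count_def by (simp add: sum_distrib_left)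
qed

lemma sum_anchored_subsets_full:
  assumes "a' < b" "1 \<le> j"
  shows "(\<Sum>S'\<in>anchored_subsets a' b j. if S' = {a'..<b} then 1 else 0) =
    (if a' + j = b then 1 else (0::nat))"
proof -
  have "{a'..<b} \<in> anchored_subsets a' b j \<longleftrightarrow> a' + j = b"
    using assms unfolding anchored_subsets_def by auto
  then show ?thesis using finite_anchored_subsets by (simp add: sum.delta)
qed

lemma fillings_count_le_1_Suc:
  assumes j: "1 \<le> j"
  shows "fillings_count (\<lambda>k. k \<le> 1) a b (Suc j) =
    fillings_count (\<lambda>k. k \<le> 1) (Suc a) b j + (if Suc a + j \<le> b then n_connected (b - j - Suc a) else 0)"
proof -
  let ?F = "fillings_count (\<lambda>k. k \<le> 1)" and ?G = "gap_fillings (\<lambda>k. k \<le> 1)"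
  have "?F a b (Suc j) = (\<Sum>a'\<in>{Suc a..<b}. \<Sum>S'\<in>anchored_subsets a' b j. card (?G a b (insert a S')))"
    unfolding fillings_count_def by (rule sum_anchored_subsets_Suc[OF j])
  also have "\<dots> = (\<Sum>a'\<in>{Suc a..<b}. (if a' = Suc a then ?F a' b j else 0) +
      n_connected (a' - Suc a) * (if a' + j = b then 1 else 0))"
  proof (rule sum.cong[OF refl])
    fix a' assume a': "a' \<in> {Suc a..<b}"
    have "(\<Sum>S'\<in>anchored_subsets a' b j. card (?G a b (insert a S'))) =
        (\<Sum>S'\<in>anchored_subsets a' b j. (if a' = Suc a then card (?G a' b S') else 0) +
          n_connected (a' - Suc a) * (if S' = {a'..<b} then 1 else 0))"
    proof (rule sum.cong[OF refl])
      fix S' assume "S' \<in> anchored_subsets a' b j"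
      then have "first_gap a a' b S'" using a' by unfold_locales (auto dest: anchored_subsetsD)
      then show "card (?G a b (insert a S')) = (if a' = Suc a then card (?G a' b S') else 0) +
          n_connected (a' - Suc a) * (if S' = {a'..<b} then 1 else 0)"
        by (rule first_gap.card_gap_fillings_insert_le_1)
    qed
    also have "\<dots> = (if a' = Suc a then ?F a' b j else 0) +
        n_connected (a' - Suc a) * (\<Sum>S'\<in>anchored_subsets a' b j. if S' = {a'..<b} then 1 else 0)"
      unfolding sum.distrib sum_distrib_left fillings_count_def by simp
    finally show "(\<Sum>S'\<in>anchored_subsets a' b j. card (?G a b (insert a S'))) =
        (if a' = Suc a then ?F a' b j else 0) + n_connected (a' - Suc a) * (if a' + j = b then 1 else 0)"
      using sum_anchored_subsets_full[of a' b j] a' j by simp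
  qed
  also have "\<dots> = ?F (Suc a) b j + (if Suc a + j \<le> b then n_connected (b - j - Suc a) else 0)"
  proof -
    have "(\<Sum>a'\<in>{Suc a..<b}. if a' = Suc a then ?F a' b j else 0) = ?F (Suc a) b j"
      using fillings_count_eq_0[of b "Suc a" j] j by (cases "Suc a < b") (simp_all add: sum.delta)
    moreover have "(\<Sum>a'\<in>{Suc a..<b}. n_connected (a' - Suc a) * (if a' + j = b then 1 else 0)) =
        (\<Sum>a'\<in>{Suc a..<b}. if a' = b - j then n_connected (a' - Suc a) else 0)"
      by (rule sum.cong) auto
    moreover have "\<dots> = (if Suc a + j \<le> b then n_connected (b - j - Suc a) else 0)"
      using j by (simp add: sum.delta', arith)
    ultimately show ?thesis by (simp add: sum.distrib)
  qed
  finally show ?thesis .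
qed

lemma fillings_count_le_1:
  assumes "1 \<le> j" "j \<le> b - a"
  shows "fillings_count (\<lambda>k. k \<le> 1) a b j = (if j = b - a then 1 else 0) + j * n_connected (b - a - j)"
  using assms
proof (induction j arbitrary: a rule: nat_induct_at_least)
  case base
  then show ?case
    using fillings_count_1[of a b] card_matchings_le_1_component[of "{Suc a..<b}"] by auto
next
  case (Suc j)
  have "fillings_count (\<lambda>k. k \<le> 1) (Suc a) b j =
      (if j = b - Suc a then 1 else 0) + j * n_connected (b - Suc a - j)"
    using Suc.IH Suc.prems by simp
  moreover have "fillings_count (\<lambda>k. k \<le> 1) a b (Suc j) =
      fillings_count (\<lambda>k. k \<le> 1) (Suc a) b j + n_connected (b - j - Suc a)"
    using fillings_count_le_1_Suc[OF Suc.hyps] Suc.prems by simp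
  moreover have "a < b" using Suc.prems Suc.hyps by simp
  ultimately show ?case using Suc.prems by (auto simp: algebra_simps)
qed

definition matchings_by_points :: "rat fps" where
  "matchings_by_points = Abs_fps (\<lambda>n. of_nat (n_matchings n))"

lemma fillings_count_all:
  assumes "1 \<le> j" "j \<le> b - a"
  shows "of_nat (fillings_count (\<lambda>_. True) a b j) = fps_nth (matchings_by_points ^ j) (b - a - j)"
  using assms
proof (induction j arbitrary: a rule: nat_induct_at_least)
  case base
  then show ?case
    using fillings_count_1[of a b] card_matchings[of "{Suc a..<b}"] by (simp add: matchings_by_points_def)
next
  case (Suc j)
  define N where "N = b - a - Suc j"
  have bj: "N + Suc a = b - j" unfolding N_def using Suc.prems by simp
  define f where "f a' = (of_nat (n_matchings (a' - Suc a)) :: rat) * of_nat (fillings_count (\<lambda>_. True) a' b j)" for a'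
  have "(of_nat (fillings_count (\<lambda>_. True) a b (Suc j)) :: rat) = (\<Sum>a'\<in>{Suc a..<b}. f a')"
    unfolding fillings_count_all_Suc[OF Suc.hyps] f_def by simp
  also have "\<dots> = (\<Sum>a'\<in>{Suc a..b - j}. f a')"
  proof (rule sum.mono_neutral_right)
    show "{Suc a..b - j} \<subseteq> {Suc a..<b}" using Suc.hyps Suc.prems by auto
    show "\<forall>i\<in>{Suc a..<b} - {Suc a..b - j}. f i = 0"
      using fillings_count_eq_0 unfolding f_def by auto
  qed simp
  also have "\<dots> = (\<Sum>i\<in>{0..N}. f (i + Suc a))"
  proof -
    have "{Suc a..b - j} = {0 + Suc a..N + Suc a}" using bj by simp
    then show ?thesis by (simp only: sum.shift_bounds_cl_nat_ivl)
  qed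
  also have "\<dots> = (\<Sum>i\<in>{0..N}. fps_nth matchings_by_points i * fps_nth (matchings_by_points ^ j) (N - i))"
  proof (intro sum.cong refl)
    fix i assume i: "i \<in> {0..N}"
    have "b - (i + Suc a) - j = N - i" "j \<le> b - (i + Suc a)" using i bj by auto
    then show "f (i + Suc a) = fps_nth matchings_by_points i * fps_nth (matchings_by_points ^ j) (N - i)"
      using Suc.IH[of "i + Suc a"] unfolding f_def by (simp add: matchings_by_points_def)
  qed
  also have "\<dots> = fps_nth (matchings_by_points ^ Suc j) N" by (simp add: fps_mult_nth)
  finally show ?case unfolding N_def .
qed

section \<open>Generating functions\<close>

lemma card_matchings_interval_by_root:
  assumes "a < b"
  shows "card {G. matching {a..<b} G \<and> \<Phi> (num_components G)} =
    (\<Sum>j\<in>{1..b-a}. n_connected j * fillings_count (\<lambda>k. \<Phi> (Suc k)) a b j)"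
proof -
  have "Min {a..<b} = a" using assms by (intro Min_eqI) auto
  then show ?thesis
    using card_matchings_by_root[of "{a..<b}" \<Phi>] sum_anchored_by_card[OF assms] assms
    unfolding fillings_count_def gap_fillings_def by simp
qed

definition matchings_by_chords :: "rat fps" where
  "matchings_by_chords = Abs_fps (\<lambda>n. of_nat (n_matchings (2*n)))"

definition connected_by_chords :: "rat fps" where
  "connected_by_chords = Abs_fps (\<lambda>n. of_nat (n_connected (2*n)))"

lemma fps_nth_compose_X_power_2:
  "fps_nth (F oo fps_X^2) m = (if even m then fps_nth F (m div 2) else (0::rat))"
proof -
  have "fps_nth (F oo fps_X^2) m = (\<Sum>i=0..m. fps_nth F i * (if m = 2*i then 1 else 0))"
    unfolding fps_compose_nth by (simp add: power_mult[symmetric])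
  also have "\<dots> = (\<Sum>i\<in>{0..m}. if i = m div 2 \<and> even m then fps_nth F i else 0)"
    by (intro sum.cong refl) auto
  also have "\<dots> = (if even m then fps_nth F (m div 2) else 0)"
    by (cases "even m") (auto simp: sum.delta)
  finally show ?thesis .
qed

lemma fps_nth_matchings_by_points_power:
  "fps_nth (matchings_by_points ^ j) (2*N) = fps_nth (matchings_by_chords ^ j) N"
proof -
  have comp: "matchings_by_points = matchings_by_chords oo fps_X^2"
    by (rule fps_ext)
      (auto simp: fps_nth_compose_X_power_2 matchings_by_points_def matchings_by_chords_def n_matchings_odd)
  have "matchings_by_points ^ j = matchings_by_chords ^ j oo fps_X^2"
    unfolding comp by (rule fps_compose_power) simp
  then show ?thesis by (simp add: fps_nth_compose_X_power_2)
qed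

lemma sum_even:
  fixes g :: "nat \<Rightarrow> rat"
  assumes odd0: "\<And>j. odd j \<Longrightarrow> g j = 0"
  shows "(\<Sum>j\<in>{1..2*n}. g j) = (\<Sum>k\<in>{1..n}. g (2*k))"
proof -
  have "(\<Sum>k\<in>{1..n}. g (2*k)) = (\<Sum>j\<in>(\<lambda>k. 2*k) ` {1..n}. g j)"
    by (simp add: sum.reindex inj_on_def)
  also have "\<dots> = (\<Sum>j\<in>{1..2*n}. g j)"
  proof (rule sum.mono_neutral_left)
    show "\<forall>i\<in>{1..2*n} - (\<lambda>k. 2*k) ` {1..n}. g i = 0"
    proof
      fix i assume i: "i \<in> {1..2*n} - (\<lambda>k. 2*k) ` {1..n}"
      have "odd i"
      proof
        assume "even i"
        then obtain k where "i = 2*k" by blast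
        then show False using i by auto
      qed
      then show "g i = 0" by (rule odd0)
    qed
  qed auto
  finally show ?thesis by simp
qed

text \<open>Splitting off the root component: its \<open>2k\<close> endpoints leave \<open>2k\<close> gaps, each filled by an
  arbitrary matching, whence the composition with \<open>x D(x)\<^sup>2\<close>.\<close>

lemma matchings_by_chords_root_equation:
  "matchings_by_chords = 1 + (connected_by_chords oo (fps_X * matchings_by_chords^2))"
  (is "?D = 1 + (?C oo ?T)")
proof (rule fps_ext)
  fix n
  show "fps_nth ?D n = fps_nth (1 + (?C oo ?T)) n"
  proof (cases "n = 0")
    case True
    then show ?thesis
      by (simp add: matchings_by_chords_def connected_by_chords_def n_matchings_0 n_connected_0)
  next
    case False
    have "n_matchings (2*n) = card {G. matching {1..<2*n+1} G \<and> True}"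
      using card_matchings[of "{1..<2*n+1}"] by simp
    also have "\<dots> = (\<Sum>j\<in>{1..2*n}. n_connected j * fillings_count (\<lambda>_. True) 1 (2*n+1) j)"
      using card_matchings_interval_by_root[of 1 "2*n+1" "\<lambda>_. True"] False by simp
    finally have "(of_nat (n_matchings (2*n)) :: rat) =
        (\<Sum>j\<in>{1..2*n}. of_nat (n_connected j) * fps_nth (matchings_by_points ^ j) (2*n - j))"
      by (simp add: fillings_count_all)
    also have "\<dots> = (\<Sum>k\<in>{1..n}. of_nat (n_connected (2*k)) *
        fps_nth (matchings_by_points ^ (2*k)) (2*n - 2*k))"
      by (rule sum_even) (simp add: n_connected_odd)
    also have "\<dots> = (\<Sum>k\<in>{1..n}. fps_nth ?C k * fps_nth (?T^k) n)"
    proof (intro sum.cong refl)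
      fix k assume k: "k \<in> {1..n}"
      have "2*n - 2*k = 2*(n-k)" by simp
      moreover have "fps_nth (?T^k) n = fps_nth (?D^(2*k)) (n - k)"
        using k by (simp add: power_mult_distrib power_mult fps_X_power_mult_nth)
      ultimately show "of_nat (n_connected (2*k)) * fps_nth (matchings_by_points ^ (2*k)) (2*n - 2*k) =
          fps_nth ?C k * fps_nth (?T^k) n"
        by (simp add: fps_nth_matchings_by_points_power connected_by_chords_def)
    qed
    also have "\<dots> = (\<Sum>k\<in>{0..n}. fps_nth ?C k * fps_nth (?T^k) n)"
      by (rule sum.mono_neutral_left) (auto simp: connected_by_chords_def n_connected_0 Suc_le_eq)
    also have "\<dots> = fps_nth (?C oo ?T) n" by (simp add: fps_compose_nth)
    finally show ?thesis using False by (simp add: matchings_by_chords_def)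
  qed
qed

text \<open>This is the recurrence \<open>d (n + 1) = (2 n + 1) d n\<close> for the double factorials.\<close>

lemma matchings_by_chords_ode:
  "matchings_by_chords - 1 = fps_X * matchings_by_chords + 2 * fps_X^2 * fps_deriv matchings_by_chords"
proof (rule fps_ext)
  fix n
  show "fps_nth (matchings_by_chords - 1) n =
      fps_nth (fps_X * matchings_by_chords + 2 * fps_X^2 * fps_deriv matchings_by_chords) n"
  proof (cases n)
    case 0 then show ?thesis by (simp add: matchings_by_chords_def n_matchings_0)
  next
    case (Suc m)
    show ?thesis
    proof (cases m)
      case 0
      moreover have "n_matchings 2 = 1"
        using n_matchings_Suc_Suc[of 0] n_matchings_0 by (simp add: numeral_2_eq_2)
      ultimately show ?thesis
        using Suc by (simp add: matchings_by_chords_def n_matchings_0 fps_X_power_mult_nth mult.assoc)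
    next
      case (Suc k)
      have "2 * Suc (Suc k) = Suc (Suc (2 * Suc k))" by simp
      then have "n_matchings (2 * Suc (Suc k)) = Suc (2 * Suc k) * n_matchings (2 * Suc k)"
        by (simp only: n_matchings_Suc_Suc)
      also have "Suc (2 * Suc k) = 2*k+3" by simp
      finally have rec: "n_matchings (2 * Suc (Suc k)) = (2*k+3) * n_matchings (2 * Suc k)" .
      have "fps_nth (2 * fps_X^2 * fps_deriv matchings_by_chords) n = 2 * fps_nth (fps_deriv matchings_by_chords) k"
        using \<open>n = Suc m\<close> Suc by (simp add: mult.assoc fps_X_power_mult_nth numeral_fps_const)
      then show ?thesis using \<open>n = Suc m\<close> Suc rec by (simp add: matchings_by_chords_def algebra_simps)
    qed
  qed
qed

lemma I0_mult_matchings_by_chords: "I0 * matchings_by_chords = matchings_by_chords - 1"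
proof (rule fps_ext)
  fix n
  have I0: "I0 = Abs_fps (\<lambda>n. of_nat (n_indecomposable n))"
    unfolding I0_def n_indecomposable_def ..
  have "n_indecomposable 0 = 0" unfolding n_indecomposable_def indecomposable_def by simp
  show "fps_nth (I0 * matchings_by_chords) n = fps_nth (matchings_by_chords - 1) n"
  proof (cases "n = 0")
    case True then show ?thesis
      by (simp add: I0 matchings_by_chords_def n_matchings_0 \<open>n_indecomposable 0 = 0\<close>)
  next
    case False
    have "fps_nth (I0 * matchings_by_chords) n =
        (\<Sum>i=0..n. of_nat (n_indecomposable i) * of_nat (n_matchings (2*(n-i))))"
      by (simp add: fps_mult_nth I0 matchings_by_chords_def)
    also have "\<dots> = (\<Sum>i=1..n. of_nat (n_indecomposable i) * of_nat (n_matchings (2*(n-i))))"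
      by (rule sum.mono_neutral_right) (auto simp: \<open>n_indecomposable 0 = 0\<close> Suc_le_eq)
    also have "\<dots> = of_nat (n_matchings (2*n))" using n_matchings_first_split_sum False by simp
    finally show ?thesis using False by (simp add: matchings_by_chords_def)
  qed
qed

lemma card_chord_diagrams_le_2_components:
  assumes "0 < n"
  shows "(of_nat (card {C. chord_diagram n C \<and> num_components C \<le> 2}) :: rat) =
    of_nat (n_connected (2*n)) + 2 * (\<Sum>k=1..n. of_nat k * of_nat (n_connected (2*k)) * of_nat (n_connected (2*(n-k))))"
proof -
  have "{1..2*n} = {1..<2*n+1::nat}" by auto
  then have card_eq: "card {C. chord_diagram n C \<and> num_components C \<le> 2} =
      (\<Sum>j\<in>{1..2*n}. n_connected j * fillings_count (\<lambda>k. k \<le> 1) 1 (2*n+1) j)"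
    using card_matchings_interval_by_root[of 1 "2*n+1" "\<lambda>k. k \<le> 2"] assms
    by (simp add: chord_diagram_iff_matching Suc_le_eq[symmetric])
  have "(of_nat (card {C. chord_diagram n C \<and> num_components C \<le> 2}) :: rat) =
      (\<Sum>j\<in>{1..2*n}. of_nat (n_connected j) *
        ((if j = 2*n then 1 else 0) + of_nat j * of_nat (n_connected (2*n - j))))"
    unfolding card_eq of_nat_sum
  proof (intro sum.cong refl)
    fix j assume "j \<in> {1..2*n}"
    then have "1 \<le> j" "j \<le> (2*n+1) - 1" by auto
    from fillings_count_le_1[OF this]
    have "fillings_count (\<lambda>k. k \<le> 1) 1 (2*n+1) j = (if j = 2*n then 1 else 0) + j * n_connected (2*n - j)"
      by (simp only: diff_add_inverse2)
    then show "of_nat (n_connected j * fillings_count (\<lambda>k. k \<le> 1) 1 (2*n+1) j) =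
        (of_nat (n_connected j) * ((if j = 2*n then 1 else 0) + of_nat j * of_nat (n_connected (2*n - j))) :: rat)"
      by simp
  qed
  also have "\<dots> = (\<Sum>j\<in>{1..2*n}. (if j = 2*n then of_nat (n_connected j) else 0) +
        of_nat j * of_nat (n_connected j) * of_nat (n_connected (2*n - j)))"
    by (intro sum.cong refl) (simp add: algebra_simps)
  also have "\<dots> = of_nat (n_connected (2*n)) +
      (\<Sum>j\<in>{1..2*n}. of_nat j * of_nat (n_connected j) * of_nat (n_connected (2*n - j)))"
    using assms by (simp add: sum.distrib sum.delta')
  also have "(\<Sum>j\<in>{1..2*n}. of_nat j * of_nat (n_connected j) * (of_nat (n_connected (2*n - j)) :: rat)) =
      (\<Sum>k\<in>{1..n}. of_nat (2*k) * of_nat (n_connected (2*k)) * of_nat (n_connected (2*n - 2*k)))"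
    by (rule sum_even) (simp add: n_connected_odd)
  finally show ?thesis by (simp add: sum_distrib_left algebra_simps diff_mult_distrib2)
qed

lemma fps_nth_X_deriv_mult:
  "fps_nth (fps_X * fps_deriv F * G) n = (\<Sum>i=1..n. of_nat i * fps_nth F i * fps_nth G (n - i))"
proof -
  have "fps_nth (fps_X * fps_deriv F * G) n = (\<Sum>i=0..n. fps_nth (fps_X * fps_deriv F) i * fps_nth G (n - i))"
    by (rule fps_mult_nth)
  also have "\<dots> = (\<Sum>i=1..n. fps_nth (fps_X * fps_deriv F) i * fps_nth G (n - i))"
    by (rule sum.mono_neutral_right) (auto simp: Suc_le_eq)
  also have "\<dots> = (\<Sum>i=1..n. of_nat i * fps_nth F i * fps_nth G (n - i))"
  proof (intro sum.cong refl)
    fix i assume "i \<in> {1..n}"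
    then obtain p where "i = Suc p" by (cases i) auto
    then show "fps_nth (fps_X * fps_deriv F) i * fps_nth G (n - i) = of_nat i * fps_nth F i * fps_nth G (n - i)"
      by simp
  qed
  finally show ?thesis .
qed

lemma D_le2_equation:
  "D_le2 = 1 + connected_by_chords + 2 * fps_X * connected_by_chords * fps_deriv connected_by_chords"
  (is "_ = 1 + ?C + 2 * fps_X * ?C * fps_deriv ?C")
proof (rule fps_ext)
  fix n
  show "fps_nth D_le2 n = fps_nth (1 + ?C + 2 * fps_X * ?C * fps_deriv ?C) n"
  proof (cases "n = 0")
    case True
    have "{C. chord_diagram 0 C \<and> num_components C \<le> 2} = {{}}"
      by (auto simp: chord_diagram_iff_matching matching_empty_points_iff)
    then show ?thesis using True by (simp add: D_le2_def connected_by_chords_def n_connected_0)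
  next
    case False
    have e: "2 * fps_X * ?C * fps_deriv ?C = 2 * (fps_X * fps_deriv ?C * ?C)" by (simp add: algebra_simps)
    have "fps_nth (1 + ?C + 2 * fps_X * ?C * fps_deriv ?C) n =
        of_nat (n_connected (2*n)) + 2 * fps_nth (fps_X * fps_deriv ?C * ?C) n"
      unfolding e using False by (simp add: connected_by_chords_def numeral_fps_const del: fps_X_mult_nth)
    moreover have "fps_nth (fps_X * fps_deriv ?C * ?C) n =
        (\<Sum>k=1..n. of_nat k * of_nat (n_connected (2*k)) * of_nat (n_connected (2*(n-k))))"
      unfolding fps_nth_X_deriv_mult by (simp add: connected_by_chords_def)
    ultimately show ?thesis
      using card_chord_diagrams_le_2_components False by (simp add: D_le2_def)
  qed
qed

section \<open>The fixpoint equation\<close>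

lemma fps_nth_power_cong:
  fixes Z W :: "'a::comm_ring_1 fps"
  assumes "\<forall>i\<le>k. fps_nth Z i = fps_nth W i"
  shows "fps_nth (Z^j) k = fps_nth (W^j) k"
  using assms
proof (induction j arbitrary: k)
  case 0 then show ?case by simp
next
  case (Suc j)
  have "fps_nth (Z^Suc j) k = (\<Sum>i=0..k. fps_nth Z i * fps_nth (Z^j) (k-i))" by (simp add: fps_mult_nth)
  also have "\<dots> = (\<Sum>i=0..k. fps_nth W i * fps_nth (W^j) (k-i))"
    by (rule sum.cong) (use Suc in auto)
  also have "\<dots> = fps_nth (W^Suc j) k" by (simp add: fps_mult_nth)
  finally show ?case .
qed

lemma fps_nth_compose_cong:
  fixes Z W B :: "'a::comm_ring_1 fps"
  assumes "\<forall>i\<le>k. fps_nth Z i = fps_nth W i"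
  shows "fps_nth (B oo Z) k = fps_nth (B oo W) k"
  unfolding fps_compose_nth using fps_nth_power_cong[OF assms] by simp

text \<open>The coefficient of \<open>x\<^sup>n\<^sup>+\<^sup>1\<close> in \<open>x B(Z)\<close> depends only on the coefficients of \<open>Z\<close> up to \<open>x\<^sup>n\<close>.\<close>

lemma fps_compose_fixpoint_unique:
  fixes Z W B :: "'a::comm_ring_1 fps"
  assumes "Z = fps_X * (B oo Z)" "W = fps_X * (B oo W)"
  shows "Z = W"
proof -
  have "\<forall>i\<le>n. fps_nth Z i = fps_nth W i" for n
  proof (induction n)
    case 0
    then show ?case using assms by (metis fps_X_mult_nth le_zero_eq)
  next
    case (Suc n)
    have "fps_nth Z (Suc n) = fps_nth (B oo Z) n" using assms(1) by (metis fps_X_mult_nth nat.simps(3) diff_Suc_1)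
    also have "\<dots> = fps_nth (B oo W) n" by (rule fps_nth_compose_cong[OF Suc])
    also have "\<dots> = fps_nth W (Suc n)" using assms(2) by (metis fps_X_mult_nth nat.simps(3) diff_Suc_1)
    finally show ?case using Suc by (auto simp: le_Suc_eq)
  qed
  then show ?thesis by (simp add: fps_eq_iff) blast
qed

text \<open>The identity \<open>D\<^sup>2 = B(x D\<^sup>2)\<close> is checked after multiplication by \<open>T' = D\<^sup>2 + 2 x D D'\<close>,
  the derivative of \<open>T = x D\<^sup>2\<close>, using \<open>D' = C'(T) T'\<close> and the differential equation.\<close>

lemma square_eq_compose_root:
  fixes D C B :: "'a::field fps"
  assumes D0: "fps_nth D 0 = 1"
    and ode: "D - 1 = fps_X * D + 2 * fps_X^2 * fps_deriv D"
    and DC: "D = 1 + (C oo fps_X * D^2)"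
    and B: "B = 1 + C + 2 * fps_X * C * fps_deriv C + fps_X"
  shows "D^2 = B oo fps_X * D^2"
proof -
  define T where "T = fps_X * D^2"
  have T0: "fps_nth T 0 = 0" by (simp add: T_def)
  define c' where "c' = fps_deriv C oo T"
  have CT: "C oo T = D - 1" using DC T_def by (metis add_diff_cancel_left')
  have dD: "fps_deriv D = c' * fps_deriv T"
    using fps_compose_deriv[OF T0, of C] CT unfolding c'_def by simp
  have dT: "fps_deriv T = D^2 + 2 * fps_X * D * fps_deriv D"
    by (simp add: T_def power2_eq_square algebra_simps mult_2)
  have "fps_nth (fps_deriv T) 0 = 1" using D0 by (simp add: dT power2_eq_square)
  then have dT0: "fps_deriv T \<noteq> 0" by (metis fps_zero_nth zero_neq_one)
  have BT: "B oo T = 1 + (D - 1) + 2 * T * (D - 1) * c' + T"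
    using B T0 CT by (simp add: fps_compose_add_distrib fps_compose_mult_distrib c'_def)
  have "fps_deriv T * D^2 = fps_deriv T * (1 + (D - 1) + 2 * T * (D - 1) * c' + T)"
  proof -
    have e: "fps_deriv T * c' = fps_deriv D" using dD by simp
    show ?thesis unfolding dT T_def using ode e[unfolded dT] by algebra
  qed
  then show ?thesis using dT0 BT unfolding T_def by simp
qed

lemma indecomposables_eq_via_root:
  fixes D I B :: "'a::field fps"
  assumes D0: "fps_nth D 0 = 1"
    and ode: "D - 1 = fps_X * D + 2 * fps_X^2 * fps_deriv D"
    and ID: "I * D = D - 1"
    and root: "D^2 = B oo fps_X * D^2"
  shows "I = fps_X / (1 - fps_X * (fps_deriv B oo fps_X * D^2))"
proof -
  define T where "T = fps_X * D^2"
  define W where "W = 1 - fps_X * (fps_deriv B oo T)"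
  have T0: "fps_nth T 0 = 0" by (simp add: T_def)
  have dT: "fps_deriv T = D^2 + 2 * fps_X * D * fps_deriv D"
    by (simp add: T_def power2_eq_square algebra_simps mult_2)
  have "fps_nth (fps_deriv T) 0 = 1" using D0 by (simp add: dT power2_eq_square)
  then have dT0: "fps_deriv T \<noteq> 0" by (metis fps_zero_nth zero_neq_one)
  have key: "D^2 = B oo T" using root unfolding T_def .
  have "fps_deriv T = fps_deriv (fps_X * (B oo T))" using key T_def by simp
  also have "\<dots> = (B oo T) + fps_X * ((fps_deriv B oo T) * fps_deriv T)"
    by (simp add: fps_compose_deriv[OF T0])
  finally have TW: "fps_deriv T * W = D^2" unfolding W_def using key by (simp add: algebra_simps)
  have "fps_deriv T * (I * W) = I * D * D" using TW by (simp add: algebra_simps power2_eq_square)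
  also have "\<dots> = (D - 1) * D" using ID by simp
  also have "\<dots> = fps_deriv T * fps_X" unfolding dT using ode by algebra
  finally have IW: "I * W = fps_X" using dT0 by simp
  have W0: "fps_nth W 0 = 1" by (simp add: W_def)
  have "fps_X / W = I * W * inverse W" using IW W0 by (simp add: fps_divide_unit)
  also have "\<dots> = I" using W0 inverse_mult_eq_1'[of W] by (simp add: mult.assoc)
  finally show ?thesis unfolding W_def T_def by simp
qed

theorem corollary3p6p4:
  fixes B :: "rat fps"
  assumes "B = D_le2 + fps_X"
  shows "(\<exists>!Z :: rat fps. fps_nth Z 0 = 0 \<and> Z = fps_X * (B oo Z)) \<and>
         (\<forall>Z :: rat fps. fps_nth Z 0 = 0 \<and> Z = fps_X * (B oo Z) \<longrightarrow>
            I0 = fps_X / (1 - fps_X * (fps_deriv B oo Z)))"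
proof -
  let ?D = matchings_by_chords
  have D0: "fps_nth ?D 0 = 1" by (simp add: matchings_by_chords_def n_matchings_0)
  have root: "?D^2 = B oo fps_X * ?D^2"
    using square_eq_compose_root[OF D0 matchings_by_chords_ode matchings_by_chords_root_equation]
      assms D_le2_equation by simp
  then have fixpoint: "fps_X * ?D^2 = fps_X * (B oo fps_X * ?D^2)" by simp
  have "fps_nth Z 0 = 0 \<and> Z = fps_X * (B oo Z) \<longleftrightarrow> Z = fps_X * ?D^2" for Z
    using fps_compose_fixpoint_unique[OF _ fixpoint, of Z] fixpoint by auto
  moreover have "I0 = fps_X / (1 - fps_X * (fps_deriv B oo fps_X * ?D^2))"
    by (rule indecomposables_eq_via_root[OF D0 matchings_by_chords_ode I0_mult_matchings_by_chords root])
  ultimately show ?thesis by auto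
qed

end
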